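(* Let $\{\mathcal{A}_i\}_{i\in[M]}$ be finite index sets, $v_{i,a}\in\mathbb{R}^n$ for $i\in[M]$, $a\in\mathcal{A}_i$, and $f_i>0$ for $i\in[M]$. Let $\bar{\mathcal{C}}$ be the set of $\pi=(\pi_{i,a})$ with $\pi_{i,a}\ge0$, $\sum_{a\in\mathcal{A}_i}\pi_{i,a}=f_i$ for all $i\in[M]$, and $\mathrm{rank}(\{\pi_{i,a}v_{i,a}\}_{i\in[M],a\in\mathcal{A}_i})=\mathrm{rank}(\{v_{i,a}\}_{i\in[M],a\in\mathcal{A}_i})=:D$. Define $\bar F(\pi)=\log\mathrm{Det}\big(\sum_{j\in[M]}\sum_{a\in\mathcal{A}_j}\pi_{j,a}v_{j,a}v_{j,a}^\intercal\big)$ and $\bar G(\pi)=\sum_{i=1}^Mf_i\max_{a\in\mathcal{A}_i}v_{i,a}^\intercal\big(\sum_{j\in[M]}\sum_{b\in\mathcal{A}_j}\pi_{j,b}v_{j,b}v_{j,b}^\intercal\big)^\dagger v_{i,a}$. Then for $\pi^*\in\bar{\mathcal{C}}$ the following are equivalent: (1) $\pi^*$ maximizes $\bar F$ over $\bar{\mathcal{C}}$; (2) $\pi^*$ minimizes $\bar G$ over $\bar{\mathcal{C}}$; (3) $\bar G(\pi^* )=D$.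
   Context: $A^\dagger$ denotes the Moore–Penrose pseudo-inverse. For $A\in\mathbb{R}^{n\times n}$, the pseudo-determinant is $\mathrm{Det}(A)=\lim_{\epsilon\to0}\det(A+\epsilon I)/\epsilon^{n-\mathrm{rank}(A)}$. *)

theory Defs
  imports "HOL-Analysis.Analysis"
begin

definition pinv :: "real^'n^'n \<Rightarrow> real^'n^'n" where
  "pinv A = (THE X. A ** X ** A = A \<and> X ** A ** X = X \<and>
                    transpose (A ** X) = A ** X \<and> transpose (X ** A) = X ** A)"

definition pdet :: "real^'n^'n \<Rightarrow> real" where
  "pdet A = Lim (at 0) (\<lambda>\<epsilon>::real. det (A + \<epsilon> *\<^sub>R mat 1) / \<epsilon> ^ (CARD('n) - rank A))"

definition outer :: "real^'n \<Rightarrow> real^'n^'n" where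
  "outer v = (\<chi> i j. v $ i * v $ j)"

definition design :: "nat \<Rightarrow> (nat \<Rightarrow> 'a set) \<Rightarrow> (nat \<Rightarrow> 'a \<Rightarrow> real^'n)
    \<Rightarrow> (nat \<Rightarrow> 'a \<Rightarrow> real) \<Rightarrow> real^'n^'n" where
  "design M A v \<pi> = (\<Sum>j\<in>{1..M}. \<Sum>a\<in>A j. \<pi> j a *\<^sub>R outer (v j a))"

definition famrank :: "nat \<Rightarrow> (nat \<Rightarrow> 'a set) \<Rightarrow> (nat \<Rightarrow> 'a \<Rightarrow> real^'n) \<Rightarrow> nat" where
  "famrank M A v = dim {v i a | i a. i \<in> {1..M} \<and> a \<in> A i}"

definition Cbar :: "nat \<Rightarrow> (nat \<Rightarrow> 'a set) \<Rightarrow> (nat \<Rightarrow> 'a \<Rightarrow> real^'n) \<Rightarrow> (nat \<Rightarrow> real)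
    \<Rightarrow> (nat \<Rightarrow> 'a \<Rightarrow> real) set" where
  "Cbar M A v f = {\<pi>. (\<forall>i\<in>{1..M}. \<forall>a\<in>A i. \<pi> i a \<ge> 0)
      \<and> (\<forall>i\<in>{1..M}. (\<Sum>a\<in>A i. \<pi> i a) = f i)
      \<and> famrank M A (\<lambda>i a. \<pi> i a *\<^sub>R v i a) = famrank M A v}"

definition Fbar :: "nat \<Rightarrow> (nat \<Rightarrow> 'a set) \<Rightarrow> (nat \<Rightarrow> 'a \<Rightarrow> real^'n)
    \<Rightarrow> (nat \<Rightarrow> 'a \<Rightarrow> real) \<Rightarrow> real" where
  "Fbar M A v \<pi> = ln (pdet (design M A v \<pi>))"

definition Gbar :: "nat \<Rightarrow> (nat \<Rightarrow> 'a set) \<Rightarrow> (nat \<Rightarrow> 'a \<Rightarrow> real^'n) \<Rightarrow> (nat \<Rightarrow> real)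
    \<Rightarrow> (nat \<Rightarrow> 'a \<Rightarrow> real) \<Rightarrow> real" where
  "Gbar M A v f \<pi> = (\<Sum>i\<in>{1..M}. f i *
      Max ((\<lambda>a. v i a \<bullet> (pinv (design M A v \<pi>) *v v i a)) ` A i))"

end

theory Submission
  imports Defs
begin

text \<open>
  All feasible designs \<open>\<pi>\<close> give design matrices \<open>V(\<pi>)\<close> with the same range, the span of the
  \<open>v\<^sub>i\<^sub>,\<^sub>a\<close>, of dimension \<open>D\<close>; diagonalising \<open>V(\<pi>)\<close> orthogonally, its pseudo-inverse and
  pseudo-determinant are computed eigenvalue by eigenvalue. For the leverages
  \<open>g\<^sub>\<pi>(y) = y\<^sup>T V(\<pi>)\<^sup>\<dagger> y\<close> the trace identity \<open>\<Sum> \<pi>\<^sub>i\<^sub>,\<^sub>a g\<^sub>\<pi>(v\<^sub>i\<^sub>,\<^sub>a) = tr (V\<^sup>\<dagger> V) = D\<close> gives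
  \<open>G(\<pi>) \<ge> D\<close> everywhere.

  Regularising by \<open>V + e I\<close> and whitening with \<open>(V(\<pi>\<^sub>0) + e I)\<^sup>-\<^sup>1\<^sup>/\<^sup>2\<close>, the bound
  \<open>\<Prod> \<mu>\<^sub>k \<le> exp (\<Sum> \<mu>\<^sub>k - n)\<close> on the eigenvalues of the whitened matrix yields, as \<open>e \<rightarrow> 0+\<close>,
  the concavity estimate \<open>pdet V(\<pi>) \<le> pdet V(\<pi>\<^sub>0) \<cdot> exp (\<Sum> \<pi>\<^sub>i\<^sub>,\<^sub>a g\<^sub>\<pi>\<^sub>0(v\<^sub>i\<^sub>,\<^sub>a) - D)\<close>;
  so \<open>G(\<pi>\<^sub>0) = D\<close> makes \<open>\<pi>\<^sub>0\<close> a maximiser of \<open>F\<close>. Conversely, moving a small mass \<open>t\<close> from a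
  support point \<open>a\<close> to a point \<open>b\<close> of the same block changes \<open>log pdet\<close> by at least
  \<open>t (g(b) - g(a)) - O(t\<^sup>2)\<close>, so at a maximiser every support point maximises \<open>g\<close> on its
  block, which is \<open>G = D\<close>. Finally \<open>F\<close> attains its maximum, because adding the projector onto
  the orthogonal complement of the span turns \<open>pdet\<close> into a continuous determinant on a compact
  polytope; a minimiser of \<open>G\<close> therefore has \<open>G \<le> D\<close>.
\<close>

section \<open>Orthogonal diagonalisation of symmetric matrices\<close>

definition diag_mat :: "('n::finite \<Rightarrow> real) \<Rightarrow> real^'n^'n" where
  "diag_mat d = (\<chi> i j. if i = j then d i else 0)"

abbreviation orth_diag :: "real^'n^'n \<Rightarrow> ('n \<Rightarrow> real) \<Rightarrow> real^'n^'n" where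
  "orth_diag P d \<equiv> P ** diag_mat d ** transpose P"

lemma inner_transpose_mulv: "(transpose B *v x) \<bullet> y = x \<bullet> (B *v y)" for B :: "real^'n^'m"
  by (simp only: transpose_matrix_vector dot_lmul_matrix)

lemma inner_symmetric_mulv:
  fixes B :: "real^'n^'n"
  assumes "transpose B = B"
  shows "x \<bullet> (B *v y) = (B *v x) \<bullet> y"
  using inner_transpose_mulv[of B x y] assms by simp

lemma quadratic_nonpos_imp_linear_coeff_zero:
  fixes c d :: real
  assumes "\<And>t. 2 * t * c + t^2 * d \<le> 0"
  shows "c = 0"
proof -
  define e where "e = \<bar>d\<bar> + 1"
  have e: "e > 0" "2 * e + d > 0" by (auto simp: e_def)
  have "e^2 * (2 * (c / e) * c + (c / e)^2 * d) = c^2 * (2 * e + d)"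
    using e by (simp add: field_simps power2_eq_square)
  moreover have "e^2 * (2 * (c / e) * c + (c / e)^2 * d) \<le> 0"
    using assms[of "c / e"] by (simp add: mult_nonneg_nonpos)
  ultimately have "c^2 \<le> 0" using e by (simp add: mult_le_0_iff)
  thus ?thesis by simp
qed

text \<open>The first variation of the Rayleigh quotient at the maximiser vanishes in every direction
  orthogonal to it.\<close>

lemma eigenvector_of_maximal_quadratic_form:
  fixes B :: "real^'n^'n"
  assumes sym: "transpose B = B" and W: "subspace W" and inv: "\<And>x. x \<in> W \<Longrightarrow> B *v x \<in> W"
    and uW: "u \<in> W" and uu: "u \<bullet> u = 1"
    and max: "\<And>x. x \<in> W \<Longrightarrow> x \<bullet> (B *v x) \<le> (u \<bullet> (B *v u)) * (x \<bullet> x)"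
  shows "B *v u = (u \<bullet> (B *v u)) *\<^sub>R u"
proof -
  let ?l = "u \<bullet> (B *v u)"
  have orth: "z \<bullet> (B *v u) = 0" if zW: "z \<in> W" and zu: "z \<bullet> u = 0" for z
  proof (rule quadratic_nonpos_imp_linear_coeff_zero)
    fix t
    define c where "c = z \<bullet> (B *v u)"
    have "u \<bullet> (B *v z) = c"
      unfolding c_def using inner_symmetric_mulv[OF sym, of u z] by (simp add: inner_commute)
    hence "(u + t *\<^sub>R z) \<bullet> (B *v (u + t *\<^sub>R z)) = ?l + 2 * t * c + t^2 * (z \<bullet> (B *v z))"
      unfolding c_def by (simp add: matrix_vector_right_distrib matrix_vector_mult_scaleR
          inner_add_left inner_add_right power2_eq_square algebra_simps)
    moreover have "(u + t *\<^sub>R z) \<bullet> (u + t *\<^sub>R z) = 1 + t^2 * (z \<bullet> z)"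
      using uu zu by (simp add: inner_add_left inner_add_right inner_commute power2_eq_square)
    moreover have "u + t *\<^sub>R z \<in> W" using uW zW W by (simp add: subspace_add subspace_scale)
    ultimately show "2 * t * c + t^2 * (z \<bullet> (B *v z) - ?l * (z \<bullet> z)) \<le> 0"
      using max[of "u + t *\<^sub>R z"] by (simp add: algebra_simps)
  qed
  define z where "z = B *v u - ?l *\<^sub>R u"
  have zW: "z \<in> W" unfolding z_def using W inv uW by (simp add: subspace_diff subspace_scale)
  have zu: "z \<bullet> u = 0" unfolding z_def using uu
    by (simp add: inner_diff_left inner_commute[of "B *v u" u])
  have "z \<bullet> z = z \<bullet> (B *v u) - ?l * (z \<bullet> u)" unfolding z_def
    by (simp add: inner_diff_right)
  also have "\<dots> = 0" using orth[OF zW zu] zu by simp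
  finally show ?thesis by (simp add: z_def)
qed

lemma symmetric_matrix_eigenvector_in_invariant_subspace:
  fixes B :: "real^'n^'n"
  assumes sym: "transpose B = B" and W: "subspace W" and inv: "\<And>x. x \<in> W \<Longrightarrow> B *v x \<in> W"
    and nontriv: "\<not> W \<subseteq> {0}"
  obtains u l where "u \<in> W" "norm u = 1" "B *v u = l *\<^sub>R u"
proof -
  define K where "K = W \<inter> sphere 0 1"
  define q where "q x = x \<bullet> (B *v x)" for x
  have unit: "x /\<^sub>R norm x \<in> K" if "x \<in> W" "x \<noteq> 0" for x
    unfolding K_def using that W by (auto simp: subspace_scale)
  have "compact K" unfolding K_def using W by (simp add: closed_subspace closed_Int_compact)
  moreover have "K \<noteq> {}" using nontriv unit by blast
  moreover have "continuous_on K q" unfolding q_def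
    by (intro continuous_intros linear_continuous_on matrix_vector_mul_linear)
  ultimately obtain u where u: "u \<in> K" and umax: "\<And>y. y \<in> K \<Longrightarrow> q y \<le> q u"
    using continuous_attains_sup[of K q] by blast
  have uW: "u \<in> W" and un: "norm u = 1" using u by (auto simp: K_def)
  have "q x \<le> q u * (x \<bullet> x)" if "x \<in> W" for x
  proof (cases "x = 0")
    case False
    have "(inverse (norm x))^2 * q x \<le> q u"
      using umax[OF unit[OF that False]] by (simp add: q_def matrix_vector_mult_scaleR power2_eq_square)
    hence "q x \<le> q u * (norm x)^2" using False
      by (simp add: field_simps power2_eq_square)
    thus ?thesis by (simp add: power2_norm_eq_inner)
  qed (simp add: q_def)
  hence "B *v u = q u *\<^sub>R u"
    unfolding q_def using un by (intro eigenvector_of_maximal_quadratic_form[OF sym W inv uW])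
      (auto simp: norm_eq_1 q_def)
  thus ?thesis using that uW un by blast
qed

lemma subset_span_insert_of_orthogonal_complement:
  assumes W: "subspace W" and uW: "u \<in> W" and uu: "u \<bullet> u = 1"
    and E: "{x \<in> W. x \<bullet> u = 0} \<subseteq> span E"
  shows "W \<subseteq> span (insert u E)"
proof
  fix x assume xW: "x \<in> W"
  have "x - (x \<bullet> u) *\<^sub>R u \<in> {x \<in> W. x \<bullet> u = 0}"
    using xW uW uu W by (simp add: subspace_diff subspace_scale inner_diff_left)
  hence "x - (x \<bullet> u) *\<^sub>R u \<in> span (insert u E)"
    using E span_mono[of E "insert u E"] by auto
  moreover have "(x \<bullet> u) *\<^sub>R u \<in> span (insert u E)"
    by (simp add: span_base span_scale)
  ultimately have "(x - (x \<bullet> u) *\<^sub>R u) + (x \<bullet> u) *\<^sub>R u \<in> span (insert u E)"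
    by (rule span_add)
  thus "x \<in> span (insert u E)" by simp
qed

lemma symmetric_invariant_subspace_eigenbasis:
  fixes B :: "real^'n^'n"
  assumes sym: "transpose B = B"
  shows "subspace W \<Longrightarrow> (\<And>x. x \<in> W \<Longrightarrow> B *v x \<in> W) \<Longrightarrow>
    \<exists>E. E \<subseteq> W \<and> W \<subseteq> span E \<and> (\<forall>u\<in>E. norm u = 1 \<and> (\<exists>l. B *v u = l *\<^sub>R u))
      \<and> pairwise orthogonal E"
proof (induction "dim W" arbitrary: W rule: less_induct)
  case less
  show ?case
  proof (cases "W \<subseteq> {0}")
    case True
    then show ?thesis by (intro exI[of _ "{}"]) auto
  next
    case False
    then obtain u l where uW: "u \<in> W" and un: "norm u = 1" and eig: "B *v u = l *\<^sub>R u"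
      using symmetric_matrix_eigenvector_in_invariant_subspace[OF sym less.prems] by blast
    have uu: "u \<bullet> u = 1" using un by (simp add: norm_eq_1)
    define W' where "W' = {x \<in> W. x \<bullet> u = 0}"
    have subW': "subspace W'" unfolding W'_def using less.prems(1)
      by (auto simp: subspace_def inner_add_left)
    have invW': "B *v x \<in> W'" if "x \<in> W'" for x
      using that less.prems(2) inner_symmetric_mulv[OF sym, of x u] eig
      by (auto simp: W'_def)
    have "u \<notin> W'" using uu by (simp add: W'_def)
    hence "W' \<subset> W" using uW unfolding W'_def by blast
    moreover have "span W' = W'" "span W = W"
      using subW' less.prems(1) by (simp_all add: span_eq_iff)
    ultimately have "dim W' < dim W" using dim_psubset by metis
    from less.hyps[OF this subW' invW'] obtain E' where
      E': "E' \<subseteq> W'" "W' \<subseteq> span E'" "\<forall>u\<in>E'. norm u = 1 \<and> (\<exists>l. B *v u = l *\<^sub>R u)"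
          "pairwise orthogonal E'" by blast
    show ?thesis
    proof (intro exI[of _ "insert u E'"] conjI)
      show "insert u E' \<subseteq> W" using E'(1) uW by (auto simp: W'_def)
      show "W \<subseteq> span (insert u E')"
        using E'(2) by (intro subset_span_insert_of_orthogonal_complement[OF less.prems(1) uW uu])
          (simp add: W'_def)
      show "\<forall>y\<in>insert u E'. norm y = 1 \<and> (\<exists>l. B *v y = l *\<^sub>R y)"
        using E'(3) un eig by auto
      show "pairwise orthogonal (insert u E')"
        using E'(1,4) unfolding pairwise_insert
        by (auto simp: W'_def orthogonal_def inner_commute)
    qed
  qed
qed

lemma orthogonal_matrix_column_inner:
  fixes P :: "real^'n^'n"
  assumes "orthogonal_matrix P"
  shows "column k P \<bullet> column l P = (if k = l then 1 else 0)"
proof -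
  have "(transpose P ** P) $ k $ l = column k P \<bullet> column l P"
    by (simp add: matrix_matrix_mult_def transpose_def column_def inner_vec_def)
  thus ?thesis using assms by (simp add: orthogonal_matrix_def mat_def)
qed

lemma transpose_mulv_nth: "(transpose P *v x) $ k = column k P \<bullet> x" for P :: "real^'n^'m"
  by (simp add: matrix_vector_mult_def transpose_def column_def inner_vec_def)

lemma transpose_add: "transpose (B + C) = transpose B + transpose C"
  and transpose_diff: "transpose (B - C) = transpose B - transpose C"
  for B C :: "real^'n^'m"
  by (simp_all add: transpose_def vec_eq_iff)

lemma diag_mat_mulv: "diag_mat d *v w = (\<chi> k. d k * w $ k)"
  by (simp add: diag_mat_def matrix_vector_mult_def vec_eq_iff if_distrib if_distribR cong: if_cong)

lemma orth_diag_mulv: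
  "orth_diag P d *v y = (\<Sum>k\<in>UNIV. (d k * (column k P \<bullet> y)) *\<^sub>R column k P)"
  for P :: "real^'n^'n"
proof -
  have "orth_diag P d *v y = P *v (diag_mat d *v (transpose P *v y))"
    by (simp only: matrix_vector_mul_assoc matrix_mul_assoc)
  also have "\<dots> = (\<Sum>k\<in>UNIV. (d k * (column k P \<bullet> y)) *\<^sub>R column k P)"
    by (simp add: matrix_mult_sum[of P] diag_mat_mulv transpose_mulv_nth scalar_mult_eq_scaleR
        del: transpose_matrix_vector)
  finally show ?thesis .
qed

lemma inner_orth_diag_mulv:
  "x \<bullet> (orth_diag P d *v y) = (\<Sum>k\<in>UNIV. d k * (column k P \<bullet> x) * (column k P \<bullet> y))"
  for P :: "real^'n^'n"
  by (simp add: orth_diag_mulv inner_sum_right inner_commute algebra_simps)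

lemma orth_diag_mulv_column:
  fixes P :: "real^'n^'n"
  assumes "orthogonal_matrix P"
  shows "orth_diag P d *v column k P = d k *\<^sub>R column k P"
  by (simp add: orth_diag_mulv orthogonal_matrix_column_inner[OF assms] if_distrib if_distribR
      cong: if_cong)

lemma orth_diag_one:
  fixes P :: "real^'n^'n"
  assumes "orthogonal_matrix P"
  shows "orth_diag P (\<lambda>_. 1) = mat 1"
  using assms by (simp add: diag_mat_def mat_def[symmetric] orthogonal_matrix_def)

lemma orthogonal_matrix_column_expansion:
  fixes P :: "real^'n^'n"
  assumes "orthogonal_matrix P"
  shows "y = (\<Sum>k\<in>UNIV. (column k P \<bullet> y) *\<^sub>R column k P)"
  using orth_diag_mulv[of P "\<lambda>_. 1" y] orth_diag_one[OF assms] by simp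

lemma orth_diag_eqI:
  fixes B P :: "real^'n^'n"
  assumes P: "orthogonal_matrix P" and eig: "\<And>k. B *v column k P = d k *\<^sub>R column k P"
  shows "B = orth_diag P d"
  unfolding matrix_eq
proof
  fix y
  have "B *v y = B *v (\<Sum>k\<in>UNIV. (column k P \<bullet> y) *\<^sub>R column k P)"
    using orthogonal_matrix_column_expansion[OF P, of y] by simp
  also have "\<dots> = (\<Sum>k\<in>UNIV. (d k * (column k P \<bullet> y)) *\<^sub>R column k P)"
    by (simp add: vec.sum matrix_vector_mult_scaleR eig mult.commute)
  finally show "B *v y = orth_diag P d *v y" by (simp add: orth_diag_mulv)
qed

lemma symmetric_matrix_orth_diag:
  fixes B :: "real^'n^'n"
  assumes sym: "transpose B = B"
  obtains P d where "orthogonal_matrix P" "B = orth_diag P d"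
proof -
  obtain E where E: "UNIV \<subseteq> span E" "\<forall>u\<in>E. norm u = 1 \<and> (\<exists>l. B *v u = l *\<^sub>R u)"
      "pairwise orthogonal E"
    using symmetric_invariant_subspace_eigenbasis[OF sym subspace_UNIV] by blast
  have "0 \<notin> E" using E(2) by force
  hence ind: "independent E" using E(3) by (simp add: pairwise_orthogonal_independent)
  hence "card E = dim (UNIV :: (real^'n) set)"
    using basis_card_eq_dim[of E UNIV] E(1) by auto
  hence "card E = CARD('n)" by (simp add: dim_UNIV DIM_cart)
  moreover have "finite E" using ind independent_imp_finite by blast
  ultimately obtain g where g: "bij_betw g (UNIV::'n set) E"
    using bij_betw_iff_card[of "UNIV::'n set" E] by auto
  have gE: "g k \<in> E" for k using g by (auto simp: bij_betw_def)
  define P :: "real^'n^'n" where "P = (\<chi> i k. g k $ i)"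
  have col: "column k P = g k" for k by (simp add: P_def column_def vec_eq_iff)
  have P: "orthogonal_matrix P"
    unfolding orthogonal_matrix_orthonormal_columns col
  proof (intro conjI allI impI)
    fix k show "norm (g k) = 1" using E(2) gE by blast
  next
    fix k l :: 'n assume "k \<noteq> l"
    hence "g k \<noteq> g l" using g by (auto simp: bij_betw_def inj_on_def)
    thus "orthogonal (g k) (g l)" using E(3) gE unfolding pairwise_def by blast
  qed
  define d where "d k = (SOME l. B *v g k = l *\<^sub>R g k)" for k
  have "B *v g k = d k *\<^sub>R g k" for k
    unfolding d_def using E(2) gE[of k] by (metis (mono_tags, lifting) someI_ex)
  hence "B = orth_diag P d" by (intro orth_diag_eqI[OF P]) (simp add: col)
  thus ?thesis using that P by blast
qed

lemma orth_diag_add_scaled_id: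
  fixes P :: "real^'n^'n"
  assumes "orthogonal_matrix P"
  shows "orth_diag P d + c *\<^sub>R mat 1 = orth_diag P (\<lambda>k. d k + c)"
  by (rule orth_diag_eqI[OF assms])
    (simp add: matrix_vector_mult_add_rdistrib orth_diag_mulv_column[OF assms]
      scaleR_matrix_vector_assoc[symmetric] scaleR_add_left)

lemma orth_diag_mult:
  fixes P :: "real^'n^'n"
  assumes "orthogonal_matrix P"
  shows "orth_diag P a ** orth_diag P b = orth_diag P (\<lambda>k. a k * b k)"
proof (rule orth_diag_eqI[OF assms])
  fix k
  have "(orth_diag P a ** orth_diag P b) *v column k P = orth_diag P a *v (orth_diag P b *v column k P)"
    by (rule matrix_vector_mul_assoc[symmetric])
  thus "(orth_diag P a ** orth_diag P b) *v column k P = (a k * b k) *\<^sub>R column k P"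
    by (simp add: orth_diag_mulv_column[OF assms] matrix_vector_mult_scaleR)
qed

lemma transpose_orth_diag: "transpose (orth_diag P d) = orth_diag P d"
proof -
  have "transpose (diag_mat d) = diag_mat d" by (simp add: diag_mat_def transpose_def vec_eq_iff)
  thus ?thesis by (simp add: matrix_transpose_mul matrix_mul_assoc)
qed

lemma det_orth_diag:
  fixes P :: "real^'n^'n"
  assumes "orthogonal_matrix P"
  shows "det (orth_diag P d) = (\<Prod>k\<in>UNIV. d k)"
proof -
  have "det P * det (transpose P) = 1"
    using assms by (metis det_I det_mul orthogonal_matrix_def)
  moreover have "det (diag_mat d) = (\<Prod>k\<in>UNIV. d k)"
    by (subst det_diagonal) (auto simp: diag_mat_def)
  ultimately show ?thesis by (simp add: det_mul)
qed

lemma orthogonal_matrix_columns_independent: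
  fixes P :: "real^'n^'n"
  assumes P: "orthogonal_matrix P"
  shows "independent ((\<lambda>k. column k P) ` K)" and "inj (\<lambda>k. column k P)"
proof -
  have "column k P \<noteq> 0" for k
    using orthogonal_matrix_column_inner[OF P, of k k] by auto
  thus "independent ((\<lambda>k. column k P) ` K)"
    using orthogonal_matrix_column_inner[OF P]
    by (intro pairwise_orthogonal_independent) (auto simp: pairwise_def orthogonal_def)
  show "inj (\<lambda>k. column k P)"
    using orthogonal_matrix_column_inner[OF P] by (intro injI) (metis zero_neq_one)
qed

lemma range_orth_diag:
  fixes P :: "real^'n^'n"
  assumes P: "orthogonal_matrix P"
  shows "range ((*v) (orth_diag P d)) = span ((\<lambda>k. column k P) ` {k. d k \<noteq> 0})"
    (is "_ = span ?C")
proof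
  show "range ((*v) (orth_diag P d)) \<subseteq> span ?C"
  proof clarify
    fix y
    show "orth_diag P d *v y \<in> span ?C"
      unfolding orth_diag_mulv
    proof (rule span_sum)
      fix k
      show "(d k * (column k P \<bullet> y)) *\<^sub>R column k P \<in> span ?C"
        by (cases "d k = 0") (auto intro: span_scale span_base span_zero)
    qed
  qed
  show "span ?C \<subseteq> range ((*v) (orth_diag P d))"
  proof (rule span_minimal)
    show "subspace (range ((*v) (orth_diag P d)))"
      by (rule linear_subspace_image[OF matrix_vector_mul_linear subspace_UNIV])
    show "?C \<subseteq> range ((*v) (orth_diag P d))"
    proof clarify
      fix k assume "d k \<noteq> 0"
      hence "column k P = orth_diag P d *v ((1 / d k) *\<^sub>R column k P)"
        by (simp add: matrix_vector_mult_scaleR orth_diag_mulv_column[OF P])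
      thus "column k P \<in> range ((*v) (orth_diag P d))" by (metis rangeI)
    qed
  qed
qed

lemma rank_orth_diag:
  fixes P :: "real^'n^'n"
  assumes P: "orthogonal_matrix P"
  shows "rank (orth_diag P d) = card {k. d k \<noteq> 0}"
proof -
  have "rank (orth_diag P d) = dim ((\<lambda>k. column k P) ` {k. d k \<noteq> 0})"
    by (simp add: rank_dim_range range_orth_diag[OF P])
  also have "\<dots> = card {k. d k \<noteq> 0}"
    using orthogonal_matrix_columns_independent[OF P]
    by (simp add: dim_eq_card_independent card_image inj_on_subset[of _ UNIV])
  finally show ?thesis .
qed

section \<open>Pseudo-inverse and pseudo-determinant of a symmetric matrix\<close>

lemma moore_penrose_unique:
  fixes B X Y :: "real^'n^'n"
  assumes X: "B ** X ** B = B" "X ** B ** X = X" "transpose (B ** X) = B ** X" "transpose (X ** B) = X ** B"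
  assumes Y: "B ** Y ** B = B" "Y ** B ** Y = Y" "transpose (B ** Y) = B ** Y" "transpose (Y ** B) = Y ** B"
  shows "Y = X"
proof -
  have "X = X ** transpose (B ** X)" using X(2,3) by (simp add: matrix_mul_assoc)
  also have "B ** X = (B ** Y) ** (B ** X)" using Y(1) by (simp add: matrix_mul_assoc)
  also have "transpose ((B ** Y) ** (B ** X)) = (B ** X) ** (B ** Y)"
    using X(3) Y(3) by (simp add: matrix_transpose_mul)
  also have "X ** ((B ** X) ** (B ** Y)) = (X ** B ** X) ** B ** Y" by (simp add: matrix_mul_assoc)
  finally have x: "X = X ** B ** Y" using X(2) by simp
  have "Y = transpose (Y ** B) ** Y" using Y(2,4) by (simp add: matrix_mul_assoc)
  also have "Y ** B = Y ** (B ** X ** B)" using X(1) by simp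
  also have "\<dots> = (Y ** B) ** (X ** B)" by (simp add: matrix_mul_assoc)
  also have "transpose ((Y ** B) ** (X ** B)) = (X ** B) ** (Y ** B)"
    using X(4) Y(4) by (simp add: matrix_transpose_mul)
  also have "((X ** B) ** (Y ** B)) ** Y = X ** B ** (Y ** B ** Y)" by (simp add: matrix_mul_assoc)
  finally have "Y = X ** B ** Y" using Y(2) by simp
  thus ?thesis using x by simp
qed

lemma pinv_eqI:
  fixes B X :: "real^'n^'n"
  assumes "B ** X ** B = B" "X ** B ** X = X" "transpose (B ** X) = B ** X" "transpose (X ** B) = X ** B"
  shows "pinv B = X"
  unfolding pinv_def using assms moore_penrose_unique[OF assms] by (intro the_equality) blast+

text \<open>Since \<open>inverse 0 = 0\<close> in Isabelle, inverting the eigenvalues gives the pseudo-inverse;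
  likewise \<open>x / 0 = 0\<close> makes \<open>pinv_form\<close> below its quadratic form.\<close>

lemma pinv_orth_diag:
  fixes P :: "real^'n^'n"
  assumes P: "orthogonal_matrix P"
  shows "pinv (orth_diag P d) = orth_diag P (\<lambda>k. inverse (d k))"
proof (rule pinv_eqI)
  have inv: "d k * inverse (d k) * d k = d k" "inverse (d k) * d k * inverse (d k) = inverse (d k)"
    for k by (cases "d k = 0"; simp)+
  show "orth_diag P d ** orth_diag P (\<lambda>k. inverse (d k)) ** orth_diag P d = orth_diag P d"
    "orth_diag P (\<lambda>k. inverse (d k)) ** orth_diag P d ** orth_diag P (\<lambda>k. inverse (d k))
      = orth_diag P (\<lambda>k. inverse (d k))"
    by (simp_all only: orth_diag_mult[OF P] inv)
qed (simp_all add: orth_diag_mult[OF P] transpose_orth_diag)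

definition pinv_form :: "real^'n^'n \<Rightarrow> ('n \<Rightarrow> real) \<Rightarrow> real^'n \<Rightarrow> real" where
  "pinv_form P d y = (\<Sum>k\<in>UNIV. (column k P \<bullet> y)^2 / d k)"

lemma inner_pinv_orth_diag:
  fixes P :: "real^'n^'n"
  assumes "orthogonal_matrix P"
  shows "y \<bullet> (pinv (orth_diag P d) *v y) = pinv_form P d y"
  by (simp add: pinv_form_def pinv_orth_diag[OF assms] inner_orth_diag_mulv power2_eq_square
      divide_inverse mult_ac)

lemma pinv_form_nonneg: "(\<And>k. d k \<ge> 0) \<Longrightarrow> pinv_form P d y \<ge> 0"
  by (simp add: pinv_form_def sum_nonneg)

lemma orth_diag_shift_det_ratio_tendsto:
  fixes P :: "real^'n^'n"
  assumes P: "orthogonal_matrix P"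
  shows "((\<lambda>e. det (orth_diag P d + e *\<^sub>R mat 1) / e ^ (CARD('n) - rank (orth_diag P d)))
           \<longlongrightarrow> (\<Prod>k\<in>{k. d k \<noteq> 0}. d k)) (at 0)"
proof -
  let ?Z = "{k. d k \<noteq> 0}"
  have "det (orth_diag P d + e *\<^sub>R mat 1) / e ^ (CARD('n) - rank (orth_diag P d))
      = (\<Prod>k\<in>?Z. d k + e)" if "e \<noteq> 0" for e :: real
  proof -
    have "(\<Prod>k\<in>UNIV. d k + e) = (\<Prod>k\<in>?Z. d k + e) * (\<Prod>k\<in>-?Z. d k + e)"
      by (simp add: prod.subset_diff[of ?Z UNIV] Compl_eq_Diff_UNIV)
    also have "(\<Prod>k\<in>-?Z. d k + e) = e ^ (CARD('n) - card ?Z)"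
      by (simp add: Compl_eq_Diff_UNIV card_Diff_subset)
    finally show ?thesis using that
      by (simp add: orth_diag_add_scaled_id[OF P] det_orth_diag[OF P] rank_orth_diag[OF P])
  qed
  hence "\<forall>\<^sub>F e in at 0. (\<Prod>k\<in>?Z. d k + e)
      = det (orth_diag P d + e *\<^sub>R mat 1) / e ^ (CARD('n) - rank (orth_diag P d))"
    by (simp add: eventually_at_filter)
  moreover have "((\<lambda>e. \<Prod>k\<in>?Z. d k + e) \<longlongrightarrow> (\<Prod>k\<in>?Z. d k + 0)) (at (0::real))"
    by (intro tendsto_intros)
  ultimately show ?thesis by (simp add: tendsto_cong)
qed

lemma pdet_orth_diag:
  fixes P :: "real^'n^'n"
  assumes "orthogonal_matrix P"
  shows "pdet (orth_diag P d) = (\<Prod>k\<in>{k. d k \<noteq> 0}. d k)"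
  unfolding pdet_def using orth_diag_shift_det_ratio_tendsto[OF assms] by (rule tendsto_Lim[rotated]) simp

lemma shift_det_ratio_tendsto_pdet:
  fixes X :: "real^'n^'n"
  assumes "transpose X = X"
  shows "((\<lambda>e. det (X + e *\<^sub>R mat 1) / e ^ (CARD('n) - rank X)) \<longlongrightarrow> pdet X) (at 0)"
proof -
  obtain P d where "orthogonal_matrix P" "X = orth_diag P d"
    using symmetric_matrix_orth_diag[OF assms] by blast
  thus ?thesis using orth_diag_shift_det_ratio_tendsto[of P d] pdet_orth_diag[of P d] by simp
qed

lemma pdet_le_of_shifted_det_le:
  fixes X Y :: "real^'n^'n"
  assumes X: "transpose X = X" and Y: "transpose Y = Y" and rank: "rank X = rank Y"
    and le: "\<And>e. e > 0 \<Longrightarrow> det (X + e *\<^sub>R mat 1) \<le> det (Y + e *\<^sub>R mat 1) * c e"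
    and c: "(c \<longlongrightarrow> c0) (at_right 0)"
  shows "pdet X \<le> pdet Y * c0"
proof (rule tendsto_le[OF trivial_limit_at_right_real])
  let ?r = "CARD('n) - rank X"
  show "((\<lambda>e. det (X + e *\<^sub>R mat 1) / e ^ ?r) \<longlongrightarrow> pdet X) (at_right 0)"
    using shift_det_ratio_tendsto_pdet[OF X] by (rule filterlim_at_split[THEN iffD1, THEN conjunct2])
  have "((\<lambda>e. det (Y + e *\<^sub>R mat 1) / e ^ ?r) \<longlongrightarrow> pdet Y) (at_right 0)"
    using shift_det_ratio_tendsto_pdet[OF Y] unfolding rank
    by (rule filterlim_at_split[THEN iffD1, THEN conjunct2])
  thus "((\<lambda>e. det (Y + e *\<^sub>R mat 1) / e ^ ?r * c e) \<longlongrightarrow> pdet Y * c0) (at_right 0)"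
    using c by (rule tendsto_mult)
  have "det (X + e *\<^sub>R mat 1) / e ^ ?r \<le> det (Y + e *\<^sub>R mat 1) / e ^ ?r * c e" if "e > 0" for e
    using le[OF that] that by (simp add: divide_right_mono)
  thus "\<forall>\<^sub>F e in at_right 0. det (X + e *\<^sub>R mat 1) / e ^ ?r \<le> det (Y + e *\<^sub>R mat 1) / e ^ ?r * c e"
    by (simp add: eventually_at_filter)
qed

lemma shift_ratio_tendsto:
  fixes l :: real
  assumes "l \<ge> 0"
  shows "((\<lambda>e. e / (l + e)) \<longlongrightarrow> (if l = 0 then 1 else 0)) (at_right 0)"
proof (cases "l = 0")
  case True
  have "\<forall>\<^sub>F e in at_right 0. 1 = e / (l + e)" using True by (simp add: eventually_at_filter)
  thus ?thesis using True tendsto_cong by fastforce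
next
  case False
  have "((\<lambda>e. e / (l + e)) \<longlongrightarrow> 0 / (l + 0)) (at_right 0)"
    using False by (intro tendsto_intros) auto
  thus ?thesis using False by simp
qed

section \<open>Determinant bounds by whitening\<close>

lemma outer_mulv: "outer w *v y = (w \<bullet> y) *\<^sub>R w"
  by (simp add: outer_def vec_eq_iff matrix_vector_mult_def inner_vec_def sum_distrib_left
      sum_distrib_right mult_ac)

lemma transpose_outer: "transpose (outer w) = outer w"
  by (simp add: outer_def transpose_def vec_eq_iff mult.commute)

lemma inner_outer_mulv_self: "y \<bullet> (outer w *v y) = (w \<bullet> y)^2"
  by (simp add: outer_mulv power2_eq_square inner_commute)

definition inv_sqrt_mat :: "real^'n^'n \<Rightarrow> ('n \<Rightarrow> real) \<Rightarrow> real^'n^'n" where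
  "inv_sqrt_mat P d = orth_diag P (\<lambda>k. 1 / sqrt (d k))"

lemma transpose_inv_sqrt_mat: "transpose (inv_sqrt_mat P d) = inv_sqrt_mat P d"
  by (simp add: inv_sqrt_mat_def transpose_orth_diag)

lemma inner_inv_sqrt_mat_mulv: "(inv_sqrt_mat P d *v x) \<bullet> y = x \<bullet> (inv_sqrt_mat P d *v y)"
  by (rule inner_symmetric_mulv[OF transpose_inv_sqrt_mat, symmetric])

lemma inv_sqrt_mat_mulv_column:
  fixes P :: "real^'n^'n"
  assumes "orthogonal_matrix P"
  shows "inv_sqrt_mat P d *v column k P = (1 / sqrt (d k)) *\<^sub>R column k P"
  unfolding inv_sqrt_mat_def by (rule orth_diag_mulv_column[OF assms])

lemma inv_sqrt_mat_sandwich: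
  fixes P :: "real^'n^'n"
  assumes P: "orthogonal_matrix P" and d: "\<And>k. d k > 0"
  shows "inv_sqrt_mat P d ** orth_diag P d ** inv_sqrt_mat P d = mat 1"
proof -
  have "1 / sqrt (d k) * d k * (1 / sqrt (d k)) = 1" for k
    using d[of k] by (simp add: field_simps)
  hence "inv_sqrt_mat P d ** orth_diag P d ** inv_sqrt_mat P d = orth_diag P (\<lambda>_. 1)"
    unfolding inv_sqrt_mat_def by (simp only: orth_diag_mult[OF P])
  thus ?thesis by (simp add: orth_diag_one[OF P])
qed

lemma det_inv_sqrt_mat:
  fixes P :: "real^'n^'n"
  assumes P: "orthogonal_matrix P" and d: "\<And>k. d k > 0"
  shows "(\<Prod>k\<in>UNIV. d k) * (det (inv_sqrt_mat P d) * det (inv_sqrt_mat P d)) = 1"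
proof -
  have "d k * (1 / sqrt (d k) * (1 / sqrt (d k))) = 1" for k
    using d[of k] by (simp add: field_simps)
  thus ?thesis
    by (simp add: inv_sqrt_mat_def det_orth_diag[OF P] flip: prod.distrib)
qed

text \<open>With \<open>R = M\<^sup>-\<^sup>1\<^sup>/\<^sup>2\<close> for \<open>M = orth_diag P d\<close>, diagonalising \<open>R X R\<close> by \<open>Q\<close> gives
  \<open>det X = det M \<cdot> \<Prod>k. w\<^sub>k \<bullet> X w\<^sub>k\<close> with \<open>w\<^sub>k = R q\<^sub>k\<close>.\<close>

lemma det_whitening:
  fixes P X :: "real^'n^'n"
  assumes P: "orthogonal_matrix P" and d: "\<And>k. d k > 0" and X: "transpose X = X"
  obtains Q where "orthogonal_matrix Q"
    "det X = (\<Prod>k\<in>UNIV. d k) *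
       (\<Prod>k\<in>UNIV. (inv_sqrt_mat P d *v column k Q) \<bullet> (X *v (inv_sqrt_mat P d *v column k Q)))"
proof -
  let ?R = "inv_sqrt_mat P d"
  have "transpose (?R ** X ** ?R) = ?R ** X ** ?R"
    by (simp add: matrix_transpose_mul transpose_inv_sqrt_mat X matrix_mul_assoc)
  then obtain Q \<mu> where Q: "orthogonal_matrix Q" and Y: "?R ** X ** ?R = orth_diag Q \<mu>"
    using symmetric_matrix_orth_diag by blast
  have "\<mu> k = (?R *v column k Q) \<bullet> (X *v (?R *v column k Q))" for k
  proof -
    have "column k Q \<bullet> (orth_diag Q \<mu> *v column k Q) = \<mu> k"
      by (simp add: orth_diag_mulv_column[OF Q] orthogonal_matrix_column_inner[OF Q])
    thus ?thesis unfolding Y[symmetric]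
      by (simp add: matrix_vector_mul_assoc[symmetric] inner_inv_sqrt_mat_mulv)
  qed
  moreover have "det X = (\<Prod>k\<in>UNIV. d k) * det (?R ** X ** ?R)"
    using det_inv_sqrt_mat[OF P d] by (simp add: det_mul algebra_simps)
  ultimately show ?thesis using that[OF Q] by (simp add: Y det_orth_diag[OF Q])
qed

lemma orthogonal_matrix_trace:
  fixes Q N :: "real^'n^'n"
  assumes "orthogonal_matrix Q"
  shows "(\<Sum>k\<in>UNIV. column k Q \<bullet> (N *v column k Q)) = trace N"
proof -
  have "(\<Sum>k\<in>UNIV. column k Q \<bullet> (N *v column k Q)) = trace (transpose Q ** (N ** Q))"
    by (simp add: trace_def matrix_matrix_mult_def matrix_vector_mult_def transpose_def column_def
        inner_vec_def)
  also have "\<dots> = trace ((N ** Q) ** transpose Q)" by (rule trace_mul_sym)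
  also have "\<dots> = trace N" using assms by (simp add: matrix_mul_assoc[symmetric] orthogonal_matrix_def)
  finally show ?thesis .
qed

text \<open>Both sides equal \<open>tr (R X R)\<close>, computed in the orthonormal bases \<open>Q\<close> and \<open>P\<close>.\<close>

lemma sum_whitened_quadratic_form:
  fixes P Q X :: "real^'n^'n"
  assumes P: "orthogonal_matrix P" and Q: "orthogonal_matrix Q" and d: "\<And>k. d k > 0"
  shows "(\<Sum>k\<in>UNIV. (inv_sqrt_mat P d *v column k Q) \<bullet> (X *v (inv_sqrt_mat P d *v column k Q)))
       = (\<Sum>i\<in>UNIV. column i P \<bullet> (X *v column i P) / d i)"
proof -
  let ?R = "inv_sqrt_mat P d"
  have "(\<Sum>k\<in>UNIV. (?R *v column k Q) \<bullet> (X *v (?R *v column k Q)))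
      = (\<Sum>k\<in>UNIV. column k Q \<bullet> ((?R ** X ** ?R) *v column k Q))"
    by (simp add: inner_inv_sqrt_mat_mulv matrix_vector_mul_assoc[symmetric])
  also have "\<dots> = (\<Sum>i\<in>UNIV. column i P \<bullet> ((?R ** X ** ?R) *v column i P))"
    by (simp add: orthogonal_matrix_trace[OF Q] orthogonal_matrix_trace[OF P])
  also have "\<dots> = (\<Sum>i\<in>UNIV. column i P \<bullet> (X *v column i P) / d i)"
  proof (rule sum.cong[OF refl])
    fix i
    have "column i P \<bullet> ((?R ** X ** ?R) *v column i P) = (?R *v column i P) \<bullet> (X *v (?R *v column i P))"
      by (simp add: inner_inv_sqrt_mat_mulv matrix_vector_mul_assoc[symmetric])
    also have "\<dots> = column i P \<bullet> (X *v column i P) / d i"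
      using d[of i] by (simp add: inv_sqrt_mat_mulv_column[OF P] matrix_vector_mult_scaleR
          field_simps)
    finally show "column i P \<bullet> ((?R ** X ** ?R) *v column i P) = column i P \<bullet> (X *v column i P) / d i" .
  qed
  finally show ?thesis .
qed

lemma prod_le_exp_sum_minus_card:
  fixes \<mu> :: "'b \<Rightarrow> real"
  assumes "finite K" and "\<And>k. k \<in> K \<Longrightarrow> \<mu> k \<ge> 0"
  shows "(\<Prod>k\<in>K. \<mu> k) \<le> exp ((\<Sum>k\<in>K. \<mu> k) - card K)"
proof -
  have "(\<Prod>k\<in>K. \<mu> k) \<le> (\<Prod>k\<in>K. exp (\<mu> k - 1))"
    using assms(2) exp_ge_add_one_self[of "\<mu> _ - 1"] by (intro prod_mono) auto
  also have "\<dots> = exp (\<Sum>k\<in>K. \<mu> k - 1)" using assms(1) by (simp add: exp_sum)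
  also have "\<dots> = exp ((\<Sum>k\<in>K. \<mu> k) - card K)" by (simp add: sum_subtractf)
  finally show ?thesis .
qed

lemma exp_diff_twice_square_le:
  fixes x :: real
  assumes "-1/2 \<le> x" "x \<le> 1"
  shows "exp (x - 2 * x^2) \<le> 1 + x"
proof -
  have "x - 2 * x^2 \<le> ln (1 + x)"
  proof (cases "x \<ge> 0")
    case True
    hence "x - x^2 \<le> ln (1 + x)" using assms ln_one_plus_pos_lower_bound by blast
    thus ?thesis using zero_le_power2[of x] by linarith
  next
    case False
    hence "- (-x) - 2 * (-x)^2 \<le> ln (1 - (-x))"
      using assms by (intro ln_one_minus_pos_lower_bound) auto
    thus ?thesis by simp
  qed
  hence "exp (x - 2 * x^2) \<le> exp (ln (1 + x))" by simp
  thus ?thesis using assms by simp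
qed

lemma sum_square_scaled_diff_le:
  fixes s r :: "'b \<Rightarrow> real"
  assumes fin: "finite K" and s: "\<And>k. k \<in> K \<Longrightarrow> s k \<ge> 0" and r: "\<And>k. k \<in> K \<Longrightarrow> r k \<ge> 0"
  shows "(\<Sum>k\<in>K. (t * (s k - r k))^2) \<le> t^2 * ((sum r K)^2 + (sum s K)^2)"
proof -
  have "(t * (s k - r k))^2 \<le> t^2 * (sum s K * s k + sum r K * r k)" if k: "k \<in> K" for k
  proof -
    have sle: "s k \<le> sum s K" and rle: "r k \<le> sum r K"
      using k fin s r by (auto intro: member_le_sum)
    have "(s k - r k)^2 \<le> (s k)^2 + (r k)^2" using s[OF k] r[OF k] by (simp add: power2_diff)
    also have "\<dots> \<le> sum s K * s k + sum r K * r k"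
      using s[OF k] r[OF k] sle rle
      by (intro add_mono) (simp_all add: power2_eq_square mult_right_mono)
    finally show ?thesis by (simp add: power_mult_distrib mult_left_mono)
  qed
  hence "(\<Sum>k\<in>K. (t * (s k - r k))^2) \<le> (\<Sum>k\<in>K. t^2 * (sum s K * s k + sum r K * r k))"
    by (rule sum_mono)
  also have "\<dots> = t^2 * (sum s K * sum s K + sum r K * sum r K)"
    by (simp add: sum.distrib sum_distrib_left[symmetric])
  finally show ?thesis by (simp add: power2_eq_square add.commute)
qed

lemma exp_le_prod_one_plus_scaled_diff:
  fixes s r :: "'b \<Rightarrow> real"
  assumes fin: "finite K" and s: "\<And>k. k \<in> K \<Longrightarrow> s k \<ge> 0" and r: "\<And>k. k \<in> K \<Longrightarrow> r k \<ge> 0"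
    and t: "t \<ge> 0" "t * sum r K \<le> 1/2" "t * sum s K \<le> 1"
  shows "exp (t * (sum s K - sum r K) - 2 * t^2 * ((sum r K)^2 + (sum s K)^2))
    \<le> (\<Prod>k\<in>K. 1 + t * (s k - r k))"
proof -
  let ?x = "\<lambda>k. t * (s k - r k)"
  have sle: "s k \<le> sum s K" and rle: "r k \<le> sum r K" if "k \<in> K" for k
    using that fin s r by (auto intro: member_le_sum)
  have x_ge: "-1/2 \<le> ?x k" and x_le: "?x k \<le> 1" if k: "k \<in> K" for k
  proof -
    have "t * r k \<le> 1/2" "t * s k \<le> 1"
      using mult_left_mono[OF rle[OF k] t(1)] mult_left_mono[OF sle[OF k] t(1)] t by linarith+
    moreover have "t * r k \<ge> 0" "t * s k \<ge> 0" using r[OF k] s[OF k] t(1) by simp_all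
    ultimately show "-1/2 \<le> ?x k" "?x k \<le> 1" by (simp_all add: right_diff_distrib)
  qed
  have sq: "(\<Sum>k\<in>K. (?x k)^2) \<le> t^2 * ((sum r K)^2 + (sum s K)^2)"
    by (rule sum_square_scaled_diff_le[OF fin s r])
  have "(\<Sum>k\<in>K. ?x k) = t * (sum s K - sum r K)"
    by (simp add: sum_distrib_left[symmetric] sum_subtractf)
  moreover have "(\<Sum>k\<in>K. ?x k - 2 * (?x k)^2) = (\<Sum>k\<in>K. ?x k) - 2 * (\<Sum>k\<in>K. (?x k)^2)"
    by (simp add: sum_subtractf sum_distrib_left)
  ultimately have "t * (sum s K - sum r K) - 2 * t^2 * ((sum r K)^2 + (sum s K)^2)
      \<le> (\<Sum>k\<in>K. ?x k - 2 * (?x k)^2)"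
    using sq by linarith
  hence "exp (t * (sum s K - sum r K) - 2 * t^2 * ((sum r K)^2 + (sum s K)^2))
      \<le> exp (\<Sum>k\<in>K. ?x k - 2 * (?x k)^2)"
    by simp
  also have "\<dots> = (\<Prod>k\<in>K. exp (?x k - 2 * (?x k)^2))" using fin by (simp add: exp_sum)
  also have "\<dots> \<le> (\<Prod>k\<in>K. 1 + ?x k)"
    using x_ge x_le exp_diff_twice_square_le by (intro prod_mono) auto
  finally show ?thesis .
qed

lemma det_le_exp_whitened_trace:
  fixes P X :: "real^'n^'n"
  assumes P: "orthogonal_matrix P" and d: "\<And>k. d k > 0" and X: "transpose X = X"
    and psd: "\<And>y. y \<bullet> (X *v y) \<ge> 0"
  shows "det X \<le> (\<Prod>k\<in>UNIV. d k) * exp ((\<Sum>i\<in>UNIV. column i P \<bullet> (X *v column i P) / d i) - CARD('n))"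
proof -
  let ?w = "\<lambda>Q k. inv_sqrt_mat P d *v column k Q"
  obtain Q where Q: "orthogonal_matrix Q"
    and det: "det X = (\<Prod>k\<in>UNIV. d k) * (\<Prod>k\<in>UNIV. ?w Q k \<bullet> (X *v ?w Q k))"
    by (rule det_whitening[OF P d X])
  have "(\<Prod>k\<in>UNIV. ?w Q k \<bullet> (X *v ?w Q k)) \<le> exp ((\<Sum>k\<in>UNIV. ?w Q k \<bullet> (X *v ?w Q k)) - CARD('n))"
    by (rule prod_le_exp_sum_minus_card) (simp_all add: psd)
  moreover have "(\<Prod>k\<in>UNIV. d k) \<ge> 0" using d by (simp add: prod_nonneg less_imp_le)
  ultimately show ?thesis
    unfolding det sum_whitened_quadratic_form[OF P Q d] by (rule mult_left_mono)
qed

lemma det_rank_two_update_ge: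
  fixes P :: "real^'n^'n"
  assumes P: "orthogonal_matrix P" and d: "\<And>k. d k > 0"
    and t: "t \<ge> 0" "t * pinv_form P d a \<le> 1/2" "t * pinv_form P d b \<le> 1"
  shows "(\<Prod>k\<in>UNIV. d k) * exp (t * (pinv_form P d b - pinv_form P d a)
      - 2 * t^2 * ((pinv_form P d a)^2 + (pinv_form P d b)^2))
    \<le> det (orth_diag P d + t *\<^sub>R outer b - t *\<^sub>R outer a)"
proof -
  let ?M = "orth_diag P d" and ?R = "inv_sqrt_mat P d"
  let ?X = "?M + t *\<^sub>R outer b - t *\<^sub>R outer a"
  have "transpose ?X = ?X"
    by (simp add: transpose_add transpose_diff transpose_orth_diag transpose_outer transpose_scalar)
  then obtain Q where Q: "orthogonal_matrix Q"
    and det: "det ?X = (\<Prod>k\<in>UNIV. d k) * (\<Prod>k\<in>UNIV. (?R *v column k Q) \<bullet> (?X *v (?R *v column k Q)))"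
    by (rule det_whitening[OF P d])
  define s where "s k = ((?R *v column k Q) \<bullet> b)^2" for k
  define r where "r k = ((?R *v column k Q) \<bullet> a)^2" for k
  have sum_sq: "(\<Sum>k\<in>UNIV. ((?R *v column k Q) \<bullet> y)^2) = pinv_form P d y" for y
    using sum_whitened_quadratic_form[OF P Q d, where X = "outer y"]
    by (simp add: pinv_form_def inner_outer_mulv_self inner_commute)
  have "(?R *v column k Q) \<bullet> (?M *v (?R *v column k Q)) = 1" for k
  proof -
    have "(?R *v column k Q) \<bullet> (?M *v (?R *v column k Q)) = column k Q \<bullet> ((?R ** ?M ** ?R) *v column k Q)"
      by (simp add: inner_inv_sqrt_mat_mulv matrix_vector_mul_assoc[symmetric])
    thus ?thesis
      by (simp add: inv_sqrt_mat_sandwich[OF P d] orthogonal_matrix_column_inner[OF Q])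
  qed
  moreover have "?X *v w = ?M *v w + t *\<^sub>R ((b \<bullet> w) *\<^sub>R b) - t *\<^sub>R ((a \<bullet> w) *\<^sub>R a)" for w
    by (simp add: matrix_vector_mult_add_rdistrib matrix_vector_mult_diff_rdistrib
        scaleR_matrix_vector_assoc[symmetric] outer_mulv)
  ultimately have "(?R *v column k Q) \<bullet> (?X *v (?R *v column k Q)) = 1 + t * (s k - r k)" for k
    by (simp add: s_def r_def inner_add_right inner_diff_right power2_eq_square inner_commute
        right_diff_distrib)
  moreover have "exp (t * (pinv_form P d b - pinv_form P d a)
      - 2 * t^2 * ((pinv_form P d a)^2 + (pinv_form P d b)^2)) \<le> (\<Prod>k\<in>UNIV. 1 + t * (s k - r k))"
    using exp_le_prod_one_plus_scaled_diff[of UNIV s r t] t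
    by (simp add: s_def r_def sum_sq)
  moreover have "(\<Prod>k\<in>UNIV. d k) \<ge> 0" using d by (simp add: prod_nonneg less_imp_le)
  ultimately show ?thesis unfolding det by (simp add: mult_left_mono)
qed

section \<open>Design matrices\<close>

lemma matrix_sum_mulv: "(\<Sum>i\<in>K. F i) *v y = (\<Sum>i\<in>K. F i *v y)" for F :: "'b \<Rightarrow> real^'n^'m"
proof (induction K rule: infinite_finite_induct)
  case (insert x K)
  then show ?case by (simp add: matrix_vector_mult_add_rdistrib)
qed (simp_all add: vec_eq_iff matrix_vector_mult_def)

lemma design_mulv: "design M A v p *v y = (\<Sum>j\<in>{1..M}. \<Sum>a\<in>A j. (p j a * (v j a \<bullet> y)) *\<^sub>R v j a)"
  by (simp add: design_def matrix_sum_mulv outer_mulv scaleR_matrix_vector_assoc[symmetric])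

lemma inner_design_mulv:
  "x \<bullet> (design M A v p *v y) = (\<Sum>j\<in>{1..M}. \<Sum>a\<in>A j. p j a * (v j a \<bullet> x) * (v j a \<bullet> y))"
  by (simp add: design_mulv inner_sum_right inner_commute mult.commute mult.left_commute)

lemma transpose_design: "transpose (design M A v p) = design M A v p"
  by (simp add: design_def transpose_def outer_def vec_eq_iff sum_component mult.commute)

lemma design_nth: "design M A v p $ r $ s = (\<Sum>j\<in>{1..M}. \<Sum>e\<in>A j. p j e * (v j e $ r * v j e $ s))"
  by (simp add: design_def outer_def sum_component)

lemma design_add_diff:
  "design M A v (\<lambda>j e. p j e + q j e - r j e) = design M A v p + design M A v q - design M A v r"
  by (simp add: design_def scaleR_add_left scaleR_diff_left sum.distrib sum_subtractf)

lemma design_point_mass: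
  assumes "i \<in> {1..M}" "c \<in> A i" "finite (A i)"
  shows "design M A v (\<lambda>j e. if j = i \<and> e = c then t else 0) = t *\<^sub>R outer (v i c)"
proof -
  have "(\<Sum>e\<in>A j. (if j = i \<and> e = c then t else 0) *\<^sub>R outer (v j e))
      = (if j = i then t *\<^sub>R outer (v i c) else 0)" for j
  proof -
    have "(\<Sum>e\<in>A j. (if j = i \<and> e = c then t else 0) *\<^sub>R outer (v j e))
        = (\<Sum>e\<in>A j. if j = i \<and> e = c then t *\<^sub>R outer (v j e) else 0)"
      by (intro sum.cong) auto
    thus ?thesis using assms(2,3) by (cases "j = i") simp_all
  qed
  thus ?thesis using assms(1) by (simp add: design_def)
qed

definition move_weight :: "(nat \<Rightarrow> 'a \<Rightarrow> real) \<Rightarrow> nat \<Rightarrow> 'a \<Rightarrow> 'a \<Rightarrow> real \<Rightarrow> nat \<Rightarrow> 'a \<Rightarrow> real" where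
  "move_weight p i a b t = (\<lambda>j e. p j e + (if j = i \<and> e = b then t else 0) - (if j = i \<and> e = a then t else 0))"

lemma design_move_weight:
  assumes "i \<in> {1..M}" "a \<in> A i" "b \<in> A i" "finite (A i)"
  shows "design M A v (move_weight p i a b t) = design M A v p + t *\<^sub>R outer (v i b) - t *\<^sub>R outer (v i a)"
  using assms by (simp add: move_weight_def design_add_diff design_point_mass)

definition vec_family :: "nat \<Rightarrow> (nat \<Rightarrow> 'a set) \<Rightarrow> (nat \<Rightarrow> 'a \<Rightarrow> 'b) \<Rightarrow> 'b set" where
  "vec_family M A w = {w i a | i a. i \<in> {1..M} \<and> a \<in> A i}"

lemma vec_family_memI: "i \<in> {1..M} \<Longrightarrow> a \<in> A i \<Longrightarrow> w i a \<in> vec_family M A w"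
  unfolding vec_family_def by blast

lemma vec_familyE:
  assumes "y \<in> vec_family M A w"
  obtains i a where "y = w i a" "i \<in> {1..M}" "a \<in> A i"
  using assms unfolding vec_family_def by blast

lemma compact_Pi_UNIV:
  assumes "\<And>i. compact (K i)"
  shows "compact (Pi UNIV K :: ('i \<Rightarrow> 'b::topological_space) set)"
proof -
  have "compactin (product_topology (\<lambda>i. euclidean) UNIV) (PiE UNIV K)"
    by (simp add: compactin_PiE compactin_euclidean_iff assms)
  thus ?thesis by (simp add: euclidean_product_topology PiE_UNIV_domain compactin_euclidean_iff)
qed

lemma continuous_on_weight_coordinate: "continuous_on UNIV (\<lambda>p::nat \<Rightarrow> 'a \<Rightarrow> real. p j e)"
  by (rule continuous_on_compose2[OF continuous_on_product_coordinates
        continuous_on_product_coordinates]) auto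

lemma compact_weight_polytope:
  fixes c :: "nat \<Rightarrow> 'a \<Rightarrow> real"
  shows "compact {p. (\<forall>j e. p j e \<in> {0..c j e}) \<and> (\<forall>j\<in>J. (\<Sum>e\<in>B j. p j e) = g j)}"
proof -
  have "compact (Pi UNIV (\<lambda>j. Pi UNIV (\<lambda>e. {0..c j e})))"
    by (intro compact_Pi_UNIV compact_Icc)
  moreover have "closed (\<Inter>j\<in>J. {p. (\<Sum>e\<in>B j. p j e) = g j})"
    by (intro closed_INT ballI closed_Collect_eq continuous_intros continuous_on_weight_coordinate)
  ultimately have "compact (Pi UNIV (\<lambda>j. Pi UNIV (\<lambda>e. {0..c j e})) \<inter> (\<Inter>j\<in>J. {p. (\<Sum>e\<in>B j. p j e) = g j}))"
    by (rule compact_Int_closed)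
  moreover have "Pi UNIV (\<lambda>j. Pi UNIV (\<lambda>e. {0..c j e})) \<inter> (\<Inter>j\<in>J. {p. (\<Sum>e\<in>B j. p j e) = g j})
      = {p. (\<forall>j e. p j e \<in> {0..c j e}) \<and> (\<forall>j\<in>J. (\<Sum>e\<in>B j. p j e) = g j)}"
    by (auto simp: Pi_iff)
  ultimately show ?thesis by simp
qed

lemma span_eq_of_dim_eq:
  fixes X Y :: "(real^'n) set"
  assumes "span X \<subseteq> span Y" "dim X = dim Y"
  shows "span X = span Y"
proof -
  have "X \<subseteq> span Y" using assms(1) span_superset by blast
  hence "span X = span (span Y)" using assms(2) dim_span[of Y] by (intro dim_eq_span) auto
  thus ?thesis by (simp only: span_span)
qed

lemma small_step_exists:
  fixes ga gb c :: real
  assumes ga: "0 \<le> ga" and lt: "ga < gb" and c: "c > 0"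
  obtains t where "0 < t" "t < c" "t * ga \<le> 1/2" "t * gb \<le> 1"
    "t * (gb - ga) - 2 * t^2 * (ga^2 + gb^2) > 0"
proof -
  define K where "K = ga^2 + gb^2"
  define t where "t = min (c / 2) (min (1 / (2 * (ga + gb) + 2)) ((gb - ga) / (4 * K + 4)))"
  have K: "K \<ge> 0" by (simp add: K_def)
  have t0: "t > 0" unfolding t_def using ga lt c K by auto
  have "t \<le> 1 / (2 * (ga + gb) + 2)" "t \<le> (gb - ga) / (4 * K + 4)" unfolding t_def by linarith+
  hence "t * (2 * (ga + gb) + 2) \<le> 1" "t * (4 * K + 4) \<le> gb - ga"
    using ga lt K by (simp_all add: field_simps)
  hence A: "2 * (t * ga) + 2 * (t * gb) + 2 * t \<le> 1" and B: "4 * (t * K) + 4 * t \<le> gb - ga"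
    by (simp_all add: algebra_simps)
  have "t * ga \<ge> 0" "t * gb \<ge> 0" "t * K \<ge> 0" using t0 ga lt K by (auto intro!: mult_nonneg_nonneg)
  hence "t * ga \<le> 1/2" "t * gb \<le> 1" "2 * t * K < gb - ga" using A B t0 by linarith+
  hence "t * ((gb - ga) - 2 * t * K) > 0" using t0 by simp
  hence "t * (gb - ga) - 2 * t^2 * K > 0" by (simp add: algebra_simps power2_eq_square)
  moreover have "t < c" unfolding t_def using c by linarith
  ultimately show ?thesis using that \<open>t * ga \<le> 1/2\<close> \<open>t * gb \<le> 1\<close> t0 K_def by blast
qed

locale design_problem =
  fixes M :: nat and A :: "nat \<Rightarrow> 'a set" and v :: "nat \<Rightarrow> 'a \<Rightarrow> real^'n" and f :: "nat \<Rightarrow> real"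
  assumes finite_A: "\<And>i. i \<in> {1..M} \<Longrightarrow> finite (A i)"
    and f_pos: "\<And>i. i \<in> {1..M} \<Longrightarrow> f i > 0"
begin

abbreviation "V \<equiv> design M A v"
abbreviation "C \<equiv> Cbar M A v f"
abbreviation "D \<equiv> famrank M A v"
abbreviation "S \<equiv> vec_family M A v"
abbreviation "weighted p \<equiv> vec_family M A (\<lambda>i a. p i a *\<^sub>R v i a)"

definition feasible :: "(nat \<Rightarrow> 'a \<Rightarrow> real) \<Rightarrow> bool" where
  "feasible p \<longleftrightarrow> (\<forall>i\<in>{1..M}. \<forall>a\<in>A i. p i a \<ge> 0) \<and> (\<forall>i\<in>{1..M}. (\<Sum>a\<in>A i. p i a) = f i)"

lemma span_weighted_subset: "span (weighted p) \<subseteq> span S"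
proof (rule span_minimal[OF _ subspace_span], rule subsetI)
  fix y assume "y \<in> weighted p"
  then obtain i a where "y = p i a *\<^sub>R v i a" "i \<in> {1..M}" "a \<in> A i"
    by (rule vec_familyE)
  thus "y \<in> span S" by (simp add: span_scale span_base vec_family_memI)
qed

lemma Cbar_iff: "p \<in> C \<longleftrightarrow> feasible p \<and> span (weighted p) = span S"
proof -
  have "dim (weighted p) = dim S \<longleftrightarrow> span (weighted p) = span S"
  proof
    assume "dim (weighted p) = dim S"
    thus "span (weighted p) = span S" by (rule span_eq_of_dim_eq[OF span_weighted_subset])
  next
    assume "span (weighted p) = span S"
    hence "dim (span (weighted p)) = dim (span S)" by (rule arg_cong)
    thus "dim (weighted p) = dim S" by (simp only: dim_span)
  qed
  moreover have "famrank M A (\<lambda>i a. p i a *\<^sub>R v i a) = dim (weighted p)" "D = dim S"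
    by (simp_all add: famrank_def vec_family_def)
  ultimately show ?thesis by (simp add: Cbar_def feasible_def)
qed

lemma Cbar_nonneg: "p \<in> C \<Longrightarrow> i \<in> {1..M} \<Longrightarrow> a \<in> A i \<Longrightarrow> p i a \<ge> 0"
  and Cbar_sum: "p \<in> C \<Longrightarrow> i \<in> {1..M} \<Longrightarrow> (\<Sum>a\<in>A i. p i a) = f i"
  and Cbar_span: "p \<in> C \<Longrightarrow> span (weighted p) = span S"
  by (auto simp: Cbar_iff feasible_def)

lemma Cbar_of_support_superset:
  assumes p: "p \<in> C" and q: "feasible q"
    and supp: "\<And>j e. j \<in> {1..M} \<Longrightarrow> e \<in> A j \<Longrightarrow> p j e \<noteq> 0 \<Longrightarrow> q j e \<noteq> 0"
  shows "q \<in> C"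
proof -
  have "weighted p \<subseteq> span (weighted q)"
  proof
    fix y assume "y \<in> weighted p"
    then obtain j e where y: "y = p j e *\<^sub>R v j e" and je: "j \<in> {1..M}" "e \<in> A j"
      by (rule vec_familyE)
    show "y \<in> span (weighted q)"
    proof (cases "p j e = 0")
      case False
      have "(p j e / q j e) *\<^sub>R (q j e *\<^sub>R v j e) \<in> span (weighted q)"
        using je by (intro span_scale span_base vec_family_memI)
      thus ?thesis using supp[OF je False] by (simp add: y)
    qed (simp add: y span_zero)
  qed
  hence "span (weighted p) \<subseteq> span (weighted q)" by (rule span_minimal[OF _ subspace_span])
  hence "span (weighted q) = span S" using Cbar_span[OF p] span_weighted_subset[of q] by blast
  thus ?thesis using q by (simp add: Cbar_iff)
qed

lemma design_psd:
  assumes "p \<in> C"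
  shows "x \<bullet> (V p *v x) \<ge> 0"
proof -
  have "0 \<le> p j a * (v j a \<bullet> x) * (v j a \<bullet> x)" if "j \<in> {1..M}" "a \<in> A j" for j a
    using Cbar_nonneg[OF assms that] by (simp add: mult.assoc)
  thus ?thesis unfolding inner_design_mulv by (intro sum_nonneg) auto
qed

lemma design_point_in_span: "i \<in> {1..M} \<Longrightarrow> a \<in> A i \<Longrightarrow> v i a \<in> span S"
  by (rule span_base[OF vec_family_memI])

lemma design_eigenvalue:
  assumes P: "orthogonal_matrix P" and Vp: "V p = orth_diag P l"
  shows "l k = (\<Sum>j\<in>{1..M}. \<Sum>a\<in>A j. p j a * (v j a \<bullet> column k P)^2)"
proof -
  have "column k P \<bullet> (V p *v column k P) = l k"
    by (simp add: Vp orth_diag_mulv_column[OF P] orthogonal_matrix_column_inner[OF P])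
  thus ?thesis by (simp add: inner_design_mulv power2_eq_square mult.assoc)
qed

lemma design_eigenvalue_nonneg:
  assumes "p \<in> C" "orthogonal_matrix P" "V p = orth_diag P l"
  shows "l k \<ge> 0"
  using assms by (auto simp: design_eigenvalue Cbar_nonneg intro!: sum_nonneg)

lemma design_null_column_orthogonal:
  assumes p: "p \<in> C" and P: "orthogonal_matrix P" and Vp: "V p = orth_diag P l"
    and lk: "l k = 0" and y: "y \<in> span S"
  shows "column k P \<bullet> y = 0"
proof -
  let ?c = "column k P"
  have nn: "0 \<le> p j a * (v j a \<bullet> ?c)^2" if "j \<in> {1..M}" "a \<in> A j" for j a
    using Cbar_nonneg[OF p that] by simp
  have "(\<Sum>j\<in>{1..M}. \<Sum>a\<in>A j. p j a * (v j a \<bullet> ?c)^2) = 0"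
    using design_eigenvalue[OF P Vp, of k] lk by simp
  hence "\<forall>j\<in>{1..M}. (\<Sum>a\<in>A j. p j a * (v j a \<bullet> ?c)^2) = 0"
    using sum_nonneg_eq_0_iff[of "{1..M}" "\<lambda>j. \<Sum>a\<in>A j. p j a * (v j a \<bullet> ?c)^2"] nn
    by (simp add: sum_nonneg)
  hence zero: "p j a * (v j a \<bullet> ?c)^2 = 0" if j: "j \<in> {1..M}" and a: "a \<in> A j" for j a
    using sum_nonneg_eq_0_iff[OF finite_A[OF j], of "\<lambda>a. p j a * (v j a \<bullet> ?c)^2"] nn[OF j] a j
    by blast
  have "orthogonal ?c w" if w: "w \<in> weighted p" for w
  proof -
    obtain j a where w: "w = p j a *\<^sub>R v j a" and ja: "j \<in> {1..M}" "a \<in> A j"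
      using w by (rule vec_familyE)
    hence "p j a * (v j a \<bullet> ?c) = 0" using zero[OF ja] by (simp add: power2_eq_square)
    thus ?thesis by (simp add: w orthogonal_def inner_commute)
  qed
  hence "orthogonal ?c y" using y Cbar_span[OF p] orthogonal_to_span by blast
  thus ?thesis by (simp add: orthogonal_def)
qed

lemma span_design_nonnull_columns:
  assumes p: "p \<in> C" and P: "orthogonal_matrix P" and Vp: "V p = orth_diag P l"
  shows "span ((\<lambda>k. column k P) ` {k. l k \<noteq> 0}) = span S"
proof
  have "range ((*v) (V p)) \<subseteq> span (weighted p)"
  proof clarify
    fix y
    have "V p *v y = (\<Sum>j\<in>{1..M}. \<Sum>a\<in>A j. (v j a \<bullet> y) *\<^sub>R (p j a *\<^sub>R v j a))"
      by (simp add: design_mulv mult.commute)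
    also have "\<dots> \<in> span (weighted p)"
      by (intro span_sum span_scale span_base vec_family_memI)
    finally show "V p *v y \<in> span (weighted p)" .
  qed
  thus "span ((\<lambda>k. column k P) ` {k. l k \<noteq> 0}) \<subseteq> span S"
    using range_orth_diag[OF P, of l] Vp Cbar_span[OF p] by simp
  show "span S \<subseteq> span ((\<lambda>k. column k P) ` {k. l k \<noteq> 0})"
  proof (rule span_minimal[OF _ subspace_span], rule subsetI)
    fix y assume y: "y \<in> S"
    have "y = (\<Sum>k\<in>UNIV. (column k P \<bullet> y) *\<^sub>R column k P)"
      by (rule orthogonal_matrix_column_expansion[OF P])
    also have "\<dots> \<in> span ((\<lambda>k. column k P) ` {k. l k \<noteq> 0})"
    proof (rule span_sum)
      fix k
      show "(column k P \<bullet> y) *\<^sub>R column k P \<in> span ((\<lambda>k. column k P) ` {k. l k \<noteq> 0})"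
        using design_null_column_orthogonal[OF p P Vp _ span_base[OF y]]
        by (cases "l k = 0") (auto simp: span_zero intro: span_scale span_base)
    qed
    finally show "y \<in> span ((\<lambda>k. column k P) ` {k. l k \<noteq> 0})" .
  qed
qed

lemma card_design_nonnull:
  assumes p: "p \<in> C" and P: "orthogonal_matrix P" and Vp: "V p = orth_diag P l"
  shows "card {k. l k \<noteq> 0} = D"
proof -
  have "D = dim (span S)" by (simp add: famrank_def vec_family_def)
  also have "\<dots> = dim ((\<lambda>k. column k P) ` {k. l k \<noteq> 0})"
    by (simp add: span_design_nonnull_columns[OF assms, symmetric])
  also have "\<dots> = card {k. l k \<noteq> 0}"
    using orthogonal_matrix_columns_independent[OF P]
    by (simp add: dim_eq_card_independent card_image inj_on_subset[of _ UNIV])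
  finally show ?thesis by simp
qed

lemma rank_design:
  assumes p: "p \<in> C"
  shows "rank (V p) = D"
proof -
  obtain P l where P: "orthogonal_matrix P" and Vp: "V p = orth_diag P l"
    by (rule symmetric_matrix_orth_diag[OF transpose_design])
  show ?thesis using rank_orth_diag[OF P] card_design_nonnull[OF p P Vp] by (simp add: Vp)
qed

lemma pdet_design_pos:
  assumes p: "p \<in> C"
  shows "pdet (V p) > 0"
proof -
  obtain P l where P: "orthogonal_matrix P" and Vp: "V p = orth_diag P l"
    by (rule symmetric_matrix_orth_diag[OF transpose_design])
  have "(\<Prod>k\<in>{k. l k \<noteq> 0}. l k) > 0"
    using design_eigenvalue_nonneg[OF p P Vp] by (intro prod_pos) (auto simp: less_le)
  thus ?thesis by (simp add: Vp pdet_orth_diag[OF P])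
qed

definition leverage :: "(nat \<Rightarrow> 'a \<Rightarrow> real) \<Rightarrow> real^'n \<Rightarrow> real" where
  "leverage p y = y \<bullet> (pinv (V p) *v y)"

lemma Gbar_leverage: "Gbar M A v f p = (\<Sum>i\<in>{1..M}. f i * Max ((\<lambda>a. leverage p (v i a)) ` A i))"
  by (simp add: Gbar_def leverage_def)

lemma leverage_orth_diag:
  assumes P: "orthogonal_matrix P" and Vp: "V p = orth_diag P l"
  shows "leverage p y = pinv_form P l y"
  by (simp add: leverage_def Vp inner_pinv_orth_diag[OF P])

lemma leverage_nonneg:
  assumes p: "p \<in> C"
  shows "leverage p y \<ge> 0"
proof -
  obtain P l where P: "orthogonal_matrix P" and Vp: "V p = orth_diag P l"
    by (rule symmetric_matrix_orth_diag[OF transpose_design])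
  show ?thesis
    using design_eigenvalue_nonneg[OF p P Vp] by (simp add: leverage_orth_diag[OF P Vp] pinv_form_nonneg)
qed

text \<open>The trace identity \<open>tr (V\<^sup>\<dagger> V) = rank V\<close>, written out over the design points.\<close>

lemma sum_weighted_leverage:
  assumes p: "p \<in> C"
  shows "(\<Sum>j\<in>{1..M}. \<Sum>a\<in>A j. p j a * leverage p (v j a)) = D"
proof -
  obtain P l where P: "orthogonal_matrix P" and Vp: "V p = orth_diag P l"
    by (rule symmetric_matrix_orth_diag[OF transpose_design])
  have "(\<Sum>j\<in>{1..M}. \<Sum>a\<in>A j. p j a * leverage p (v j a))
      = (\<Sum>j\<in>{1..M}. \<Sum>a\<in>A j. \<Sum>k\<in>UNIV. p j a * (v j a \<bullet> column k P)^2 / l k)"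
    by (simp add: leverage_orth_diag[OF P Vp] pinv_form_def sum_distrib_left inner_commute)
  also have "\<dots> = (\<Sum>k\<in>UNIV. \<Sum>j\<in>{1..M}. \<Sum>a\<in>A j. p j a * (v j a \<bullet> column k P)^2 / l k)"
    by (subst sum.swap) (rule sum.swap)
  also have "\<dots> = (\<Sum>k\<in>UNIV. (\<Sum>j\<in>{1..M}. \<Sum>a\<in>A j. p j a * (v j a \<bullet> column k P)^2) / l k)"
    by (simp add: sum_divide_distrib)
  also have "\<dots> = (\<Sum>k\<in>UNIV. l k / l k)" by (simp add: design_eigenvalue[OF P Vp])
  also have "\<dots> = (\<Sum>k\<in>{k. l k \<noteq> 0}. 1)" by (rule sum.mono_neutral_cong_right) auto
  also have "\<dots> = D" using card_design_nonnull[OF p P Vp] by simp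
  finally show ?thesis .
qed

lemma sum_weighted_leverage_le_Gbar:
  assumes q: "feasible q"
  shows "(\<Sum>j\<in>{1..M}. \<Sum>a\<in>A j. q j a * leverage p (v j a)) \<le> Gbar M A v f p"
  unfolding Gbar_leverage
proof (rule sum_mono)
  fix j assume j: "j \<in> {1..M}"
  let ?m = "Max ((\<lambda>a. leverage p (v j a)) ` A j)"
  have "(\<Sum>a\<in>A j. q j a * leverage p (v j a)) \<le> (\<Sum>a\<in>A j. q j a * ?m)"
    using finite_A[OF j] q j by (intro sum_mono mult_left_mono) (auto simp: feasible_def)
  also have "\<dots> = f j * ?m" using q j by (simp add: feasible_def flip: sum_distrib_right)
  finally show "(\<Sum>a\<in>A j. q j a * leverage p (v j a)) \<le> f j * ?m" .
qed

lemma Gbar_ge_rank: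
  assumes p: "p \<in> C"
  shows "D \<le> Gbar M A v f p"
  using sum_weighted_leverage[OF p] sum_weighted_leverage_le_Gbar[of p p] p by (simp add: Cbar_iff)

text \<open>\<open>pinv_form P (\<lambda>k. l k + e)\<close> is the quadratic form of \<open>(V p + e I)\<^sup>-\<^sup>1\<close>; on \<open>span S\<close> it
  increases to the leverage as \<open>e \<rightarrow> 0+\<close>, since \<open>span S\<close> is orthogonal to the null eigenvectors.\<close>

lemma shifted_leverage_le:
  assumes p: "p \<in> C" and P: "orthogonal_matrix P" and Vp: "V p = orth_diag P l"
    and e: "e > 0" and y: "y \<in> span S"
  shows "pinv_form P (\<lambda>k. l k + e) y \<le> leverage p y"
  unfolding leverage_orth_diag[OF P Vp] pinv_form_def
proof (rule sum_mono)
  fix k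
  show "(column k P \<bullet> y)^2 / (l k + e) \<le> (column k P \<bullet> y)^2 / l k"
  proof (cases "l k = 0")
    case True
    thus ?thesis using design_null_column_orthogonal[OF p P Vp True y] by simp
  next
    case False
    hence "l k > 0" using design_eigenvalue_nonneg[OF p P Vp, of k] by simp
    thus ?thesis using e by (intro divide_left_mono) auto
  qed
qed

lemma shifted_leverage_tendsto:
  assumes p: "p \<in> C" and P: "orthogonal_matrix P" and Vp: "V p = orth_diag P l"
    and y: "y \<in> span S"
  shows "((\<lambda>e. pinv_form P (\<lambda>k. l k + e) y) \<longlongrightarrow> leverage p y) (at_right 0)"
  unfolding leverage_orth_diag[OF P Vp] pinv_form_def
proof (rule tendsto_sum)
  fix k
  show "((\<lambda>e. (column k P \<bullet> y)^2 / (l k + e)) \<longlongrightarrow> (column k P \<bullet> y)^2 / l k) (at_right 0)"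
  proof (cases "l k = 0")
    case True
    thus ?thesis using design_null_column_orthogonal[OF p P Vp True y] by simp
  next
    case False
    hence "((\<lambda>e. (column k P \<bullet> y)^2 / (l k + e)) \<longlongrightarrow> (column k P \<bullet> y)^2 / (l k + 0)) (at_right 0)"
      by (intro tendsto_intros) auto
    thus ?thesis by simp
  qed
qed

lemma sum_shift_ratio_tendsto:
  assumes p: "p \<in> C" and P: "orthogonal_matrix P" and Vp: "V p = orth_diag P l"
  shows "((\<lambda>e. \<Sum>k\<in>UNIV. e / (l k + e)) \<longlongrightarrow> real CARD('n) - D) (at_right 0)"
proof -
  have "((\<lambda>e. \<Sum>k\<in>UNIV. e / (l k + e)) \<longlongrightarrow> (\<Sum>k\<in>UNIV. if l k = 0 then 1 else 0)) (at_right 0)"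
    by (intro tendsto_sum shift_ratio_tendsto design_eigenvalue_nonneg[OF p P Vp])
  moreover have "(\<Sum>k\<in>UNIV. if l k = 0 then 1 else (0::real)) = (\<Sum>k\<in>- {k. l k \<noteq> 0}. 1)"
    by (rule sum.mono_neutral_cong_right) auto
  moreover have "card (- {k. l k \<noteq> 0}) = CARD('n) - D" "D \<le> CARD('n)"
    using card_design_nonnull[OF p P Vp] card_mono[of UNIV "{k. l k \<noteq> 0}"]
    by (simp_all add: Compl_eq_Diff_UNIV card_Diff_subset)
  ultimately show ?thesis by (simp add: of_nat_diff)
qed

lemma det_shifted_design_le_exp:
  assumes p0: "p0 \<in> C" and p: "p \<in> C" and P: "orthogonal_matrix P" and Vp0: "V p0 = orth_diag P l"
    and e: "e > 0"
  shows "det (V p + e *\<^sub>R mat 1) \<le> det (V p0 + e *\<^sub>R mat 1) *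
    exp ((\<Sum>j\<in>{1..M}. \<Sum>a\<in>A j. p j a * pinv_form P (\<lambda>k. l k + e) (v j a))
      + (\<Sum>k\<in>UNIV. e / (l k + e)) - CARD('n))"
proof -
  let ?X = "V p + e *\<^sub>R mat 1"
  have d: "l k + e > 0" for k using design_eigenvalue_nonneg[OF p0 P Vp0, of k] e by simp
  have "transpose ?X = ?X" by (simp add: transpose_add transpose_design transpose_scalar)
  moreover have "y \<bullet> (?X *v y) \<ge> 0" for y
    using design_psd[OF p, of y] e
    by (simp add: matrix_vector_mult_add_rdistrib scaleR_matrix_vector_assoc[symmetric] inner_add_right)
  ultimately have "det ?X \<le> (\<Prod>k\<in>UNIV. l k + e) *
      exp ((\<Sum>k\<in>UNIV. column k P \<bullet> (?X *v column k P) / (l k + e)) - CARD('n))"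
    by (rule det_le_exp_whitened_trace[where d = "\<lambda>k. l k + e", OF P d])
  also have "(\<Prod>k\<in>UNIV. l k + e) = det (V p0 + e *\<^sub>R mat 1)"
    by (simp add: Vp0 orth_diag_add_scaled_id[OF P] det_orth_diag[OF P])
  also have "column k P \<bullet> (?X *v column k P)
      = (\<Sum>j\<in>{1..M}. \<Sum>a\<in>A j. p j a * (column k P \<bullet> v j a)^2) + e" for k
    by (simp add: matrix_vector_mult_add_rdistrib scaleR_matrix_vector_assoc[symmetric]
        inner_add_right inner_design_mulv orthogonal_matrix_column_inner[OF P] power2_eq_square
        inner_commute mult.assoc)
  hence "(\<Sum>k\<in>UNIV. column k P \<bullet> (?X *v column k P) / (l k + e))
      = (\<Sum>k\<in>UNIV. \<Sum>j\<in>{1..M}. \<Sum>a\<in>A j. p j a * (column k P \<bullet> v j a)^2 / (l k + e))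
        + (\<Sum>k\<in>UNIV. e / (l k + e))"
    by (simp add: add_divide_distrib sum.distrib sum_divide_distrib)
  also have "(\<Sum>k\<in>UNIV. \<Sum>j\<in>{1..M}. \<Sum>a\<in>A j. p j a * (column k P \<bullet> v j a)^2 / (l k + e))
      = (\<Sum>j\<in>{1..M}. \<Sum>a\<in>A j. p j a * pinv_form P (\<lambda>k. l k + e) (v j a))"
    by (simp add: pinv_form_def sum_distrib_left) (subst sum.swap, rule sum.cong[OF refl sum.swap])
  finally show ?thesis .
qed

lemma pdet_design_le_exp:
  assumes p0: "p0 \<in> C" and p: "p \<in> C"
  shows "pdet (V p) \<le> pdet (V p0) * exp ((\<Sum>j\<in>{1..M}. \<Sum>a\<in>A j. p j a * leverage p0 (v j a)) - D)"
proof -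
  obtain P l where P: "orthogonal_matrix P" and Vp0: "V p0 = orth_diag P l"
    by (rule symmetric_matrix_orth_diag[OF transpose_design])
  show ?thesis
  proof (rule pdet_le_of_shifted_det_le[OF transpose_design transpose_design _
        det_shifted_design_le_exp[OF p0 p P Vp0]])
    show "rank (V p) = rank (V p0)" using rank_design[OF p] rank_design[OF p0] by simp
    have "((\<lambda>e. (\<Sum>j\<in>{1..M}. \<Sum>a\<in>A j. p j a * pinv_form P (\<lambda>k. l k + e) (v j a))
        + (\<Sum>k\<in>UNIV. e / (l k + e)) - CARD('n))
      \<longlongrightarrow> (\<Sum>j\<in>{1..M}. \<Sum>a\<in>A j. p j a * leverage p0 (v j a)) + (real CARD('n) - D) - CARD('n))
        (at_right 0)"
      by (intro tendsto_intros shifted_leverage_tendsto[OF p0 P Vp0] sum_shift_ratio_tendsto[OF p0 P Vp0]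
          design_point_in_span) auto
    from tendsto_exp[OF this]
    show "((\<lambda>e. exp ((\<Sum>j\<in>{1..M}. \<Sum>a\<in>A j. p j a * pinv_form P (\<lambda>k. l k + e) (v j a))
        + (\<Sum>k\<in>UNIV. e / (l k + e)) - CARD('n)))
      \<longlongrightarrow> exp ((\<Sum>j\<in>{1..M}. \<Sum>a\<in>A j. p j a * leverage p0 (v j a)) - D)) (at_right 0)"
      by simp
  qed
qed

lemma det_shifted_design_update_ge:
  assumes p0: "p0 \<in> C" and P: "orthogonal_matrix P" and Vp0: "V p0 = orth_diag P l" and e: "e > 0"
    and i: "i \<in> {1..M}" and a: "a \<in> A i" and b: "b \<in> A i"
    and t: "t > 0" "t * leverage p0 (v i a) \<le> 1/2" "t * leverage p0 (v i b) \<le> 1"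
  shows "det (V p0 + e *\<^sub>R mat 1) * exp (t * (pinv_form P (\<lambda>k. l k + e) (v i b)
      - pinv_form P (\<lambda>k. l k + e) (v i a)) - 2 * t^2 * ((leverage p0 (v i a))^2 + (leverage p0 (v i b))^2))
    \<le> det (orth_diag P (\<lambda>k. l k + e) + t *\<^sub>R outer (v i b) - t *\<^sub>R outer (v i a))"
proof -
  let ?h = "pinv_form P (\<lambda>k. l k + e)"
  have d: "l k + e > 0" for k using design_eigenvalue_nonneg[OF p0 P Vp0, of k] e by simp
  have h: "0 \<le> ?h y" "?h y \<le> leverage p0 y" if "y \<in> span S" for y
    using pinv_form_nonneg[of "\<lambda>k. l k + e"] d shifted_leverage_le[OF p0 P Vp0 e that]
    by (auto simp: less_imp_le)
  have ha: "0 \<le> ?h (v i a)" "?h (v i a) \<le> leverage p0 (v i a)"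
    and hb: "0 \<le> ?h (v i b)" "?h (v i b) \<le> leverage p0 (v i b)"
    using h design_point_in_span[OF i a] design_point_in_span[OF i b] by auto
  have "t * ?h (v i a) \<le> 1/2" "t * ?h (v i b) \<le> 1"
    using mult_left_mono[OF ha(2) less_imp_le[OF t(1)]] mult_left_mono[OF hb(2) less_imp_le[OF t(1)]]
      t(2,3) by linarith+
  hence rank_two: "(\<Prod>k\<in>UNIV. l k + e) * exp (t * (?h (v i b) - ?h (v i a))
      - 2 * t^2 * ((?h (v i a))^2 + (?h (v i b))^2))
    \<le> det (orth_diag P (\<lambda>k. l k + e) + t *\<^sub>R outer (v i b) - t *\<^sub>R outer (v i a))"
    by (intro det_rank_two_update_ge[where d = "\<lambda>k. l k + e", OF P d]) (use t(1) in auto)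
  have det: "det (V p0 + e *\<^sub>R mat 1) = (\<Prod>k\<in>UNIV. l k + e)"
    by (simp add: Vp0 orth_diag_add_scaled_id[OF P] det_orth_diag[OF P])
  have "(?h (v i a))^2 + (?h (v i b))^2 \<le> (leverage p0 (v i a))^2 + (leverage p0 (v i b))^2"
    using ha hb by (intro add_mono power_mono) auto
  hence "det (V p0 + e *\<^sub>R mat 1) * exp (t * (?h (v i b) - ?h (v i a))
      - 2 * t^2 * ((leverage p0 (v i a))^2 + (leverage p0 (v i b))^2))
    \<le> (\<Prod>k\<in>UNIV. l k + e) * exp (t * (?h (v i b) - ?h (v i a))
      - 2 * t^2 * ((?h (v i a))^2 + (?h (v i b))^2))"
    unfolding det using d by (intro mult_left_mono) (simp_all add: mult_left_mono prod_nonneg less_imp_le)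
  also note rank_two
  finally show ?thesis .
qed

lemma pdet_design_update_ge:
  assumes p0: "p0 \<in> C" and q: "q \<in> C" and i: "i \<in> {1..M}" and a: "a \<in> A i" and b: "b \<in> A i"
    and Vq: "V q = V p0 + t *\<^sub>R outer (v i b) - t *\<^sub>R outer (v i a)"
    and t: "t > 0" "t * leverage p0 (v i a) \<le> 1/2" "t * leverage p0 (v i b) \<le> 1"
  shows "pdet (V p0) * exp (t * (leverage p0 (v i b) - leverage p0 (v i a))
           - 2 * t^2 * ((leverage p0 (v i a))^2 + (leverage p0 (v i b))^2)) \<le> pdet (V q)"
proof -
  obtain P l where P: "orthogonal_matrix P" and Vp0: "V p0 = orth_diag P l"
    by (rule symmetric_matrix_orth_diag[OF transpose_design])
  define K where "K = (leverage p0 (v i a))^2 + (leverage p0 (v i b))^2"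
  define G where "G = t * (leverage p0 (v i b) - leverage p0 (v i a)) - 2 * t^2 * K"
  have "pdet (V p0) \<le> pdet (V q) * exp (- G)"
  proof (rule pdet_le_of_shifted_det_le[OF transpose_design transpose_design])
    show "rank (V p0) = rank (V q)" using rank_design[OF p0] rank_design[OF q] by simp
    show "((\<lambda>e. exp (- (t * (pinv_form P (\<lambda>k. l k + e) (v i b) - pinv_form P (\<lambda>k. l k + e) (v i a))
        - 2 * t^2 * K))) \<longlongrightarrow> exp (- G)) (at_right 0)"
      unfolding G_def
      by (intro tendsto_intros shifted_leverage_tendsto[OF p0 P Vp0] design_point_in_span i a b)
  next
    fix e :: real assume e: "e > 0"
    let ?T = "t * (pinv_form P (\<lambda>k. l k + e) (v i b) - pinv_form P (\<lambda>k. l k + e) (v i a)) - 2 * t^2 * K"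
    have "orth_diag P (\<lambda>k. l k + e) = V p0 + e *\<^sub>R mat 1"
      by (simp add: Vp0 orth_diag_add_scaled_id[OF P])
    hence "orth_diag P (\<lambda>k. l k + e) + t *\<^sub>R outer (v i b) - t *\<^sub>R outer (v i a) = V q + e *\<^sub>R mat 1"
      by (simp add: Vq algebra_simps)
    hence "det (V p0 + e *\<^sub>R mat 1) * exp ?T \<le> det (V q + e *\<^sub>R mat 1)"
      using det_shifted_design_update_ge[OF p0 P Vp0 e i a b t] by (simp add: K_def)
    hence "det (V p0 + e *\<^sub>R mat 1) * exp ?T * exp (- ?T) \<le> det (V q + e *\<^sub>R mat 1) * exp (- ?T)"
      by (rule mult_right_mono) simp
    thus "det (V p0 + e *\<^sub>R mat 1) \<le> det (V q + e *\<^sub>R mat 1) * exp (- ?T)"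
      by (simp add: mult.assoc flip: exp_add)
  qed
  hence "pdet (V p0) * exp G \<le> pdet (V q) * exp (- G) * exp G" by (rule mult_right_mono) simp
  thus ?thesis by (simp add: G_def K_def mult.assoc flip: exp_add)
qed

lemma move_weight_in_Cbar:
  assumes p: "p \<in> C" and i: "i \<in> {1..M}" and a: "a \<in> A i" and b: "b \<in> A i" and ab: "a \<noteq> b"
    and t: "0 < t" "t < p i a"
  shows "move_weight p i a b t \<in> C"
proof (rule Cbar_of_support_superset[OF p])
  have "(\<Sum>e\<in>A j. move_weight p i a b t j e) = f j" if j: "j \<in> {1..M}" for j
  proof -
    have "(\<Sum>e\<in>A j. move_weight p i a b t j e) = (\<Sum>e\<in>A j. p j e)
        + (\<Sum>e\<in>A j. if j = i \<and> e = b then t else 0) - (\<Sum>e\<in>A j. if j = i \<and> e = a then t else 0)"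
      by (simp add: move_weight_def sum.distrib sum_subtractf)
    also have "\<dots> = (\<Sum>e\<in>A j. p j e)" using finite_A[OF j] a b by (cases "j = i") simp_all
    finally show ?thesis using Cbar_sum[OF p j] by simp
  qed
  thus "feasible (move_weight p i a b t)"
    using Cbar_nonneg[OF p] t ab by (auto simp: feasible_def move_weight_def)
  show "move_weight p i a b t j e \<noteq> 0" if "j \<in> {1..M}" "e \<in> A j" "p j e \<noteq> 0" for j e
    using Cbar_nonneg[OF p that(1,2)] that(3) t ab by (auto simp: move_weight_def)
qed

subsection \<open>Optimality conditions\<close>

lemma leverage_le_of_maximizer:
  assumes p0: "p0 \<in> C" and max: "\<forall>p\<in>C. Fbar M A v p \<le> Fbar M A v p0"
    and i: "i \<in> {1..M}" and a: "a \<in> A i" and b: "b \<in> A i" and pa: "p0 i a > 0"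
  shows "leverage p0 (v i b) \<le> leverage p0 (v i a)"
proof (rule ccontr)
  assume "\<not> ?thesis"
  hence lt: "leverage p0 (v i a) < leverage p0 (v i b)" by simp
  hence ab: "a \<noteq> b" by auto
  obtain t where t: "0 < t" "t < p0 i a" "t * leverage p0 (v i a) \<le> 1/2" "t * leverage p0 (v i b) \<le> 1"
    and gain: "t * (leverage p0 (v i b) - leverage p0 (v i a))
      - 2 * t^2 * ((leverage p0 (v i a))^2 + (leverage p0 (v i b))^2) > 0"
    using small_step_exists[OF leverage_nonneg[OF p0] lt pa] by blast
  define q where "q = move_weight p0 i a b t"
  have q: "q \<in> C" unfolding q_def by (rule move_weight_in_Cbar[OF p0 i a b ab t(1,2)])
  have "V q = V p0 + t *\<^sub>R outer (v i b) - t *\<^sub>R outer (v i a)"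
    unfolding q_def using i a b finite_A[OF i] by (rule design_move_weight)
  hence "pdet (V p0) * exp (t * (leverage p0 (v i b) - leverage p0 (v i a))
      - 2 * t^2 * ((leverage p0 (v i a))^2 + (leverage p0 (v i b))^2)) \<le> pdet (V q)"
    by (rule pdet_design_update_ge[OF p0 q i a b _ t(1,3,4)])
  moreover have "pdet (V p0) < pdet (V p0) * exp (t * (leverage p0 (v i b) - leverage p0 (v i a))
      - 2 * t^2 * ((leverage p0 (v i a))^2 + (leverage p0 (v i b))^2))"
    using gain pdet_design_pos[OF p0] by simp
  ultimately have "pdet (V p0) < pdet (V q)" by linarith
  hence "Fbar M A v p0 < Fbar M A v q"
    using pdet_design_pos[OF p0] pdet_design_pos[OF q] by (simp add: Fbar_def)
  thus False using max q by force
qed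

lemma Gbar_eq_rank_of_maximizer:
  assumes p0: "p0 \<in> C" and max: "\<forall>p\<in>C. Fbar M A v p \<le> Fbar M A v p0"
  shows "Gbar M A v f p0 = D"
proof -
  have "f j * Max ((\<lambda>a. leverage p0 (v j a)) ` A j) = (\<Sum>a\<in>A j. p0 j a * leverage p0 (v j a))"
    if j: "j \<in> {1..M}" for j
  proof -
    let ?m = "Max ((\<lambda>a. leverage p0 (v j a)) ` A j)"
    have ne: "A j \<noteq> {}" using Cbar_sum[OF p0 j] f_pos[OF j] by auto
    have "p0 j a * leverage p0 (v j a) = p0 j a * ?m" if a: "a \<in> A j" for a
    proof (cases "p0 j a = 0")
      case False
      hence pa: "p0 j a > 0" using Cbar_nonneg[OF p0 j a] by simp
      have "?m \<le> leverage p0 (v j a)"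
        using leverage_le_of_maximizer[OF p0 max j a _ pa] finite_A[OF j] ne by (subst Max_le_iff) auto
      moreover have "leverage p0 (v j a) \<le> ?m" using finite_A[OF j] a by (intro Max_ge) auto
      ultimately show ?thesis by simp
    qed simp
    hence "(\<Sum>a\<in>A j. p0 j a * leverage p0 (v j a)) = (\<Sum>a\<in>A j. p0 j a * ?m)"
      by (rule sum.cong[OF refl])
    also have "\<dots> = f j * ?m" using Cbar_sum[OF p0 j] by (simp add: sum_distrib_right[symmetric])
    finally show ?thesis by simp
  qed
  hence "Gbar M A v f p0 = (\<Sum>j\<in>{1..M}. \<Sum>a\<in>A j. p0 j a * leverage p0 (v j a))"
    by (simp add: Gbar_leverage)
  thus ?thesis using sum_weighted_leverage[OF p0] by simp
qed

lemma maximizer_of_Gbar_eq_rank: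
  assumes ps: "ps \<in> C" and G: "Gbar M A v f ps = D"
  shows "\<forall>p\<in>C. Fbar M A v p \<le> Fbar M A v ps"
proof
  fix p assume p: "p \<in> C"
  have "(\<Sum>j\<in>{1..M}. \<Sum>a\<in>A j. p j a * leverage ps (v j a)) \<le> D"
    using sum_weighted_leverage_le_Gbar[of p ps] p G by (simp add: Cbar_iff)
  hence "pdet (V ps) * exp ((\<Sum>j\<in>{1..M}. \<Sum>a\<in>A j. p j a * leverage ps (v j a)) - D) \<le> pdet (V ps)"
    using pdet_design_pos[OF ps] by (intro mult_left_le) auto
  hence "pdet (V p) \<le> pdet (V ps)" using pdet_design_le_exp[OF ps p] by linarith
  thus "Fbar M A v p \<le> Fbar M A v ps" using pdet_design_pos[OF p] by (simp add: Fbar_def)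
qed

subsection \<open>Existence of a maximiser\<close>

definition restrict_weight :: "(nat \<Rightarrow> 'a \<Rightarrow> real) \<Rightarrow> nat \<Rightarrow> 'a \<Rightarrow> real" where
  "restrict_weight p j e = (if j \<in> {1..M} \<and> e \<in> A j then p j e else 0)"

lemma design_restrict_weight: "V (restrict_weight p) = V p"
  unfolding design_def restrict_weight_def by (intro sum.cong refl) auto

text \<open>The orthogonal projector onto the complement of \<open>span S\<close> turns the pseudo-determinant
  of a feasible design into an ordinary, hence continuous, determinant.\<close>

lemma complement_projection_exists:
  assumes p1: "p1 \<in> C"
  obtains Pr :: "real^'n^'n" where "\<And>y. y \<in> span S \<Longrightarrow> Pr *v y = 0"
    "\<And>y. (\<And>z. z \<in> span S \<Longrightarrow> z \<bullet> y = 0) \<Longrightarrow> Pr *v y = y"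
proof -
  obtain P l where P: "orthogonal_matrix P" and Vp: "V p1 = orth_diag P l"
    by (rule symmetric_matrix_orth_diag[OF transpose_design])
  define Pr where "Pr = orth_diag P (\<lambda>k. if l k = 0 then 1 else 0)"
  have Pr_mulv: "Pr *v y = (\<Sum>k\<in>UNIV. ((if l k = 0 then 1 else 0) * (column k P \<bullet> y)) *\<^sub>R column k P)"
    for y by (simp add: Pr_def orth_diag_mulv)
  show ?thesis
  proof (rule that)
    fix y assume "y \<in> span S"
    thus "Pr *v y = 0"
      unfolding Pr_mulv using design_null_column_orthogonal[OF p1 P Vp] by (intro sum.neutral) auto
  next
    fix y assume y: "\<And>z. z \<in> span S \<Longrightarrow> z \<bullet> y = 0"
    have "column k P \<bullet> y = 0" if "l k \<noteq> 0" for k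
      using y span_design_nonnull_columns[OF p1 P Vp] that by (auto intro: span_base)
    hence "Pr *v y = (\<Sum>k\<in>UNIV. (column k P \<bullet> y) *\<^sub>R column k P)"
      unfolding Pr_mulv by (intro sum.cong) auto
    thus "Pr *v y = y" using orthogonal_matrix_column_expansion[OF P, of y] by simp
  qed
qed

lemma det_design_add_projection:
  assumes Pr0: "\<And>y. y \<in> span S \<Longrightarrow> Pr *v y = 0"
    and Pr1: "\<And>y. (\<And>z. z \<in> span S \<Longrightarrow> z \<bullet> y = 0) \<Longrightarrow> Pr *v y = y"
    and p: "p \<in> C"
  shows "det (V p + Pr) = pdet (V p)"
proof -
  obtain P l where P: "orthogonal_matrix P" and Vp: "V p = orth_diag P l"
    by (rule symmetric_matrix_orth_diag[OF transpose_design])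
  define m where "m k = (if l k = 0 then 1 else l k)" for k
  have "(V p + Pr) *v column k P = m k *\<^sub>R column k P" for k
  proof (cases "l k = 0")
    case True
    have "Pr *v column k P = column k P"
      using Pr1 design_null_column_orthogonal[OF p P Vp True] by (simp add: inner_commute)
    thus ?thesis using True
      by (simp add: matrix_vector_mult_add_rdistrib Vp orth_diag_mulv_column[OF P] m_def)
  next
    case False
    have "column k P \<in> span S"
      using span_design_nonnull_columns[OF p P Vp] False by (auto intro: span_base)
    hence "Pr *v column k P = 0" by (rule Pr0)
    thus ?thesis using False
      by (simp add: matrix_vector_mult_add_rdistrib Vp orth_diag_mulv_column[OF P] m_def)
  qed
  hence "V p + Pr = orth_diag P m" by (rule orth_diag_eqI[OF P])
  hence "det (V p + Pr) = (\<Prod>k\<in>UNIV. m k)" by (simp add: det_orth_diag[OF P])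
  also have "\<dots> = (\<Prod>k\<in>{k. l k \<noteq> 0}. l k)" by (rule prod.mono_neutral_cong_right) (auto simp: m_def)
  also have "\<dots> = pdet (V p)" by (simp add: Vp pdet_orth_diag[OF P])
  finally show ?thesis .
qed

lemma Cbar_of_det_design_add_projection_nonzero:
  assumes Pr0: "\<And>y. y \<in> span S \<Longrightarrow> Pr *v y = 0"
    and p: "feasible p" and det: "det (V p + Pr) \<noteq> 0"
  shows "p \<in> C"
proof -
  have "\<exists>B. B ** (V p + Pr) = mat 1" using det by (auto simp: invertible_det_nz[symmetric] invertible_def)
  hence inj: "\<forall>x. (V p + Pr) *v x = 0 \<longrightarrow> x = 0" by (simp only: matrix_left_invertible_ker)
  have "span (weighted p) = span S"
  proof (rule ccontr)
    assume "span (weighted p) \<noteq> span S"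
    hence "span (weighted p) \<subset> span S" using span_weighted_subset by blast
    then obtain x where x: "x \<noteq> 0" "x \<in> span S" "\<And>y. y \<in> span (weighted p) \<Longrightarrow> orthogonal x y"
      by (rule orthogonal_to_subspace_exists_gen) blast
    have "(p j a * (v j a \<bullet> x)) *\<^sub>R v j a = 0" if "j \<in> {1..M}" "a \<in> A j" for j a
      using x(3)[OF span_base[OF vec_family_memI[where A = A and w = "\<lambda>i a. p i a *\<^sub>R v i a", OF that]]]
      by (simp add: orthogonal_def inner_commute)
    hence "V p *v x = 0" unfolding design_mulv by (intro sum.neutral ballI) auto
    hence "(V p + Pr) *v x = 0" using Pr0[OF x(2)] by (simp add: matrix_vector_mult_add_rdistrib)
    thus False using inj x(1) by blast
  qed
  thus ?thesis using p by (simp add: Cbar_iff)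
qed

lemma Fbar_maximizer_exists:
  assumes p1: "p1 \<in> C"
  shows "\<exists>p0\<in>C. \<forall>p\<in>C. Fbar M A v p \<le> Fbar M A v p0"
proof -
  obtain Pr where Pr0: "\<And>y. y \<in> span S \<Longrightarrow> Pr *v y = 0"
    and Pr1: "\<And>y. (\<And>z. z \<in> span S \<Longrightarrow> z \<bullet> y = 0) \<Longrightarrow> Pr *v y = y"
    by (rule complement_projection_exists[OF p1]) blast
  define c where "c j e = (if j \<in> {1..M} \<and> e \<in> A j then f j else 0)" for j e
  define K where "K = {p. (\<forall>j e. p j e \<in> {0..c j e}) \<and> (\<forall>j\<in>{1..M}. (\<Sum>e\<in>A j. p j e) = f j)}"
  have restrict_K: "restrict_weight p \<in> K" if p: "p \<in> C" for p
  proof -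
    have "p j e \<le> f j" if j: "j \<in> {1..M}" and e: "e \<in> A j" for j e
    proof -
      have "p j e \<le> (\<Sum>e\<in>A j. p j e)"
        using Cbar_nonneg[OF p j] finite_A[OF j] e by (intro member_le_sum) auto
      thus ?thesis using Cbar_sum[OF p j] by simp
    qed
    thus ?thesis using Cbar_nonneg[OF p] Cbar_sum[OF p]
      by (auto simp: K_def c_def restrict_weight_def)
  qed
  have "compact K" unfolding K_def by (rule compact_weight_polytope)
  moreover have "K \<noteq> {}" using restrict_K[OF p1] by blast
  moreover have "continuous_on K (\<lambda>p. det (V p + Pr))"
    unfolding det_def by (simp add: design_nth)
      (intro continuous_intros continuous_on_subset[OF continuous_on_weight_coordinate subset_UNIV])
  ultimately obtain p0 where p0K: "p0 \<in> K" and max: "\<And>q. q \<in> K \<Longrightarrow> det (V q + Pr) \<le> det (V p0 + Pr)"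
    using continuous_attains_sup[of K "\<lambda>p. det (V p + Pr)"] by blast
  have pdet_eq: "det (V (restrict_weight p) + Pr) = pdet (V p)" if "p \<in> C" for p
    using det_design_add_projection[OF Pr0 Pr1 that] by (simp add: design_restrict_weight)
  have "det (V p0 + Pr) > 0"
    using max[OF restrict_K[OF p1]] pdet_eq[OF p1] pdet_design_pos[OF p1] by simp
  moreover have "feasible p0" using p0K by (auto simp: K_def feasible_def)
  ultimately have p0: "p0 \<in> C" using Cbar_of_det_design_add_projection_nonzero[OF Pr0] by simp
  have "Fbar M A v p \<le> Fbar M A v p0" if p: "p \<in> C" for p
  proof -
    have "pdet (V p) \<le> pdet (V p0)"
      using max[OF restrict_K[OF p]] pdet_eq[OF p] det_design_add_projection[OF Pr0 Pr1 p0] by simp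
    thus ?thesis using pdet_design_pos[OF p] by (simp add: Fbar_def)
  qed
  thus ?thesis using p0 by blast
qed

end

theorem lemma7:
  fixes M :: nat and A :: "nat \<Rightarrow> 'a set" and v :: "nat \<Rightarrow> 'a \<Rightarrow> real^'n"
    and f :: "nat \<Rightarrow> real" and \<pi>s :: "nat \<Rightarrow> 'a \<Rightarrow> real"
  assumes finA: "\<And>i. i \<in> {1..M} \<Longrightarrow> finite (A i)"
    and fpos: "\<And>i. i \<in> {1..M} \<Longrightarrow> f i > 0"
    and mem: "\<pi>s \<in> Cbar M A v f"
  shows "((\<forall>\<pi>\<in>Cbar M A v f. Fbar M A v \<pi> \<le> Fbar M A v \<pi>s)
           \<longleftrightarrow> (\<forall>\<pi>\<in>Cbar M A v f. Gbar M A v f \<pi>s \<le> Gbar M A v f \<pi>))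
       \<and> ((\<forall>\<pi>\<in>Cbar M A v f. Gbar M A v f \<pi>s \<le> Gbar M A v f \<pi>)
           \<longleftrightarrow> Gbar M A v f \<pi>s = real (famrank M A v))"
proof -
  interpret design_problem M A v f using finA fpos by unfold_locales
  have max_iff: "(\<forall>\<pi>\<in>C. Fbar M A v \<pi> \<le> Fbar M A v \<pi>s) \<longleftrightarrow> Gbar M A v f \<pi>s = D"
    using Gbar_eq_rank_of_maximizer[OF mem] maximizer_of_Gbar_eq_rank[OF mem] by blast
  obtain p0 where p0: "p0 \<in> C" and max: "\<forall>p\<in>C. Fbar M A v p \<le> Fbar M A v p0"
    using Fbar_maximizer_exists[OF mem] by blast
  have min_iff: "(\<forall>\<pi>\<in>C. Gbar M A v f \<pi>s \<le> Gbar M A v f \<pi>) \<longleftrightarrow> Gbar M A v f \<pi>s = D"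
  proof
    assume "\<forall>\<pi>\<in>C. Gbar M A v f \<pi>s \<le> Gbar M A v f \<pi>"
    hence "Gbar M A v f \<pi>s \<le> D" using p0 Gbar_eq_rank_of_maximizer[OF p0 max] by force
    thus "Gbar M A v f \<pi>s = D" using Gbar_ge_rank[OF mem] by linarith
  qed (use Gbar_ge_rank in simp)
  show ?thesis using max_iff min_iff by blast
qed

end
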